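(* Let $\beta>1$. Then $m^0_\beta=m^{**}_\beta=\frac{1}{2(1+\beta)}S^2$, where $m^0_\beta=\inf_{\mathcal M^*_\beta}\mathcal E_\beta$ and $m^{**}_\beta=\inf_{\mathcal N^*_\beta}\mathcal E_\beta$.
   Context: $\mathcal D:=D^{1,2}(\mathbb R^4)\times D^{1,2}(\mathbb R^4)$, $\mathcal E_\beta(u,v)=\frac12\|\nabla u\|_{L^2}^2+\frac12\|\nabla v\|_{L^2}^2-\frac14\big(\|u\|_{L^4}^4+\|v\|_{L^4}^4+2\beta\|u^2v^2\|_{L^1}\big)$ on $\mathcal D$. $\mathcal M^*_\beta=\{(u,v)\in\mathcal D\setminus\{(0,0)\}:\langle\mathcal E_\beta'(u,v),(u,v)\rangle=0\}$, $\mathcal N^*_\beta=\{(u,v)\in\mathcal D:u\ne0,v\ne0,\ \langle\mathcal E'_\beta(u,v),(u,0)\rangle=\langle\mathcal E'_\beta(u,v),(0,v)\rangle=0\}$. $S=\inf\{\|\nabla u\|_2^2:u\in D^{1,2}(\mathbb R^4),\|u\|_4=1\}$. *)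

theory Defs
  imports "HOL-Analysis.Analysis"
begin

type_synonym R4 = "real ^ 4"

definition pd :: "4 \<Rightarrow> (R4 \<Rightarrow> real) \<Rightarrow> R4 \<Rightarrow> real" where
  "pd i f x = frechet_derivative f (at x) (axis i 1)"

fun pderivs :: "4 list \<Rightarrow> (R4 \<Rightarrow> real) \<Rightarrow> R4 \<Rightarrow> real" where
  "pderivs [] f = f"
| "pderivs (i # is) f = pd i (pderivs is f)"

definition smooth :: "(R4 \<Rightarrow> real) \<Rightarrow> bool" where
  "smooth f \<longleftrightarrow> (\<forall>is x. pderivs is f differentiable (at x))"

definition test_fn :: "(R4 \<Rightarrow> real) \<Rightarrow> bool" where
  "test_fn \<phi> \<longleftrightarrow> smooth \<phi> \<and> compact (closure {x. \<phi> x \<noteq> 0})"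

definition weak_grad :: "(R4 \<Rightarrow> real) \<Rightarrow> (R4 \<Rightarrow> R4) \<Rightarrow> bool" where
  "weak_grad u G \<longleftrightarrow> G \<in> borel_measurable lebesgue \<and>
     (\<forall>\<phi> i. test_fn \<phi> \<longrightarrow>
        (LINT x|lebesgue. u x * pd i \<phi> x) = - (LINT x|lebesgue. G x $ i * \<phi> x))"

text \<open>D^{1,2}(R^4) = {u in L^4(R^4) : weak gradient in L^2} (2^* = 4 for N = 4).\<close>
definition D12 :: "(R4 \<Rightarrow> real) \<Rightarrow> bool" where
  "D12 u \<longleftrightarrow> u \<in> borel_measurable lebesgue \<and> integrable lebesgue (\<lambda>x. (u x) ^ 4) \<and>
     (\<exists>G. weak_grad u G \<and> integrable lebesgue (\<lambda>x. (norm (G x))\<^sup>2))"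

definition grad :: "(R4 \<Rightarrow> real) \<Rightarrow> R4 \<Rightarrow> R4" where
  "grad u = (SOME G. weak_grad u G \<and> integrable lebesgue (\<lambda>x. (norm (G x))\<^sup>2))"

definition dir :: "(R4 \<Rightarrow> real) \<Rightarrow> real" where
  "dir u = (LINT x|lebesgue. (norm (grad u x))\<^sup>2)"

definition L4p :: "(R4 \<Rightarrow> real) \<Rightarrow> real" where
  "L4p u = (LINT x|lebesgue. (u x) ^ 4)"

definition cross :: "(R4 \<Rightarrow> real) \<Rightarrow> (R4 \<Rightarrow> real) \<Rightarrow> real" where
  "cross u v = (LINT x|lebesgue. (u x)\<^sup>2 * (v x)\<^sup>2)"

text \<open>u \<noteq> 0 as an element of D^{1,2} (not a.e. zero).\<close>
definition nonzero :: "(R4 \<Rightarrow> real) \<Rightarrow> bool" where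
  "nonzero u \<longleftrightarrow> \<not> (AE x in lebesgue. u x = 0)"

definition energy :: "real \<Rightarrow> (R4 \<Rightarrow> real) \<Rightarrow> (R4 \<Rightarrow> real) \<Rightarrow> real" where
  "energy \<beta> u v = dir u / 2 + dir v / 2 - (L4p u + L4p v + 2 * \<beta> * cross u v) / 4"

text \<open>The Nehari-type sets; the pairings with E' are written out explicitly.\<close>
definition Mstar :: "real \<Rightarrow> ((R4 \<Rightarrow> real) \<times> (R4 \<Rightarrow> real)) set" where
  "Mstar \<beta> = {(u, v). D12 u \<and> D12 v \<and> (nonzero u \<or> nonzero v) \<and>
      dir u + dir v - L4p u - L4p v - 2 * \<beta> * cross u v = 0}"

definition Nstar :: "real \<Rightarrow> ((R4 \<Rightarrow> real) \<times> (R4 \<Rightarrow> real)) set" where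
  "Nstar \<beta> = {(u, v). D12 u \<and> D12 v \<and> nonzero u \<and> nonzero v \<and>
      dir u - L4p u - \<beta> * cross u v = 0 \<and> dir v - L4p v - \<beta> * cross u v = 0}"

definition m0 :: "real \<Rightarrow> real" where
  "m0 \<beta> = Inf ((\<lambda>(u, v). energy \<beta> u v) ` Mstar \<beta>)"

definition m2star :: "real \<Rightarrow> real" where
  "m2star \<beta> = Inf ((\<lambda>(u, v). energy \<beta> u v) ` Nstar \<beta>)"

text \<open>Best Sobolev constant; \<parallel>u\<parallel>_4 = 1 iff \<parallel>u\<parallel>_4^4 = 1.\<close>
definition Sob :: real where
  "Sob = Inf {dir u | u. D12 u \<and> L4p u = 1}"

end

theory Submission
  imports Defs "HOL-Computational_Algebra.Polynomial"
begin

text \<open>On \<open>M\<^sup>*\<close> the energy is \<open>(\<parallel>\<nabla>u\<parallel>\<^sub>2\<^sup>2 + \<parallel>\<nabla>v\<parallel>\<^sub>2\<^sup>2) / 4\<close>. With \<open>p = \<parallel>u\<parallel>\<^sub>4\<^sup>2\<close> and \<open>q = \<parallel>v\<parallel>\<^sub>4\<^sup>2\<close>,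
  the definition of \<open>S\<close> gives \<open>\<parallel>\<nabla>u\<parallel>\<^sub>2\<^sup>2 + \<parallel>\<nabla>v\<parallel>\<^sub>2\<^sup>2 \<ge> S (p + q)\<close>, while the constraint and Cauchy-Schwarz
  give \<open>\<parallel>\<nabla>u\<parallel>\<^sub>2\<^sup>2 + \<parallel>\<nabla>v\<parallel>\<^sub>2\<^sup>2 \<le> p\<^sup>2 + q\<^sup>2 + 2\<beta> p q \<le> (1 + \<beta>) (p + q)\<^sup>2 / 2\<close> for \<open>\<beta> \<ge> 1\<close>; together
  \<open>E\<^sub>\<beta> \<ge> S\<^sup>2 / (2 (1 + \<beta>))\<close> on \<open>M\<^sup>*\<close>. Since \<open>N\<^sup>* \<subseteq> M\<^sup>*\<close>, \<open>m\<^sup>0 \<le> m\<^sup>*\<^sup>*\<close>. Conversely, the synchronized pair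
  \<open>(t z, t z)\<close> lies on \<open>N\<^sup>*\<close> for a suitable \<open>t\<close> and has energy \<open>\<parallel>\<nabla>z\<parallel>\<^sub>2\<^sup>4 / (2 (1 + \<beta>) \<parallel>z\<parallel>\<^sub>4\<^sup>4)\<close>,
  which tends to \<open>S\<^sup>2 / (2 (1 + \<beta>))\<close> along a minimizing sequence for \<open>S\<close>.

  Since the energy is defined through a chosen weak gradient, the analytic input is that weak
  gradients are unique almost everywhere (bump functions approximate indicators of boxes), so that
  \<open>\<parallel>\<nabla>\<cdot>\<parallel>\<^sub>2\<close> scales and adds as expected, together with a bump function as a nonzero element of
  \<open>D\<^sup>1\<^sup>,\<^sup>2\<close>.\<close>

section \<open>Smooth functions generated by \<open>exp (-1/t)\<close>\<close>

lemma poly_times_exp_minus_tendsto_0: "((\<lambda>x::real. poly q x * exp (- x)) \<longlongrightarrow> 0) at_top"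
proof -
  have "((\<lambda>x::real. \<Sum>i\<le>degree q. coeff q i * (x ^ i / exp x)) \<longlongrightarrow> (\<Sum>i\<le>degree q. coeff q i * 0)) at_top"
    by (intro tendsto_sum tendsto_mult tendsto_const tendsto_power_div_exp_0)
  then show ?thesis
    by (simp add: poly_altdef exp_minus field_simps sum_divide_distrib)
qed

lemma poly_inverse_times_exp_tendsto_0:
  "((\<lambda>t::real. poly q (1/t) * exp (- (1/t))) \<longlongrightarrow> 0) (at_right 0)"
proof -
  have "filterlim (\<lambda>t::real. 1/t) at_top (at_right 0)"
    using filterlim_inverse_at_top_right by (simp add: inverse_eq_divide)
  from filterlim_compose[OF poly_times_exp_minus_tendsto_0 this] show ?thesis by simp
qed

text \<open>\<open>flat_deriv n\<close> is the \<open>n\<close>-th derivative of \<open>exp (-1/t)\<close>, extended by \<open>0\<close> to \<open>t \<le> 0\<close>;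
  differentiating \<open>P(1/t) exp (-1/t)\<close> gives the recursion for \<open>flat_poly\<close>.\<close>

fun flat_poly :: "nat \<Rightarrow> real poly" where
  "flat_poly 0 = 1"
| "flat_poly (Suc n) = [:0, 0, 1:] * (flat_poly n - pderiv (flat_poly n))"

definition flat_deriv :: "nat \<Rightarrow> real \<Rightarrow> real" where
  "flat_deriv n t = (if t > 0 then poly (flat_poly n) (1/t) * exp (- (1/t)) else 0)"

lemma flat_deriv_0: "flat_deriv 0 t = (if t > 0 then exp (- (1/t)) else 0)"
  by (simp add: flat_deriv_def)

lemma flat_deriv_has_real_derivative_at_0: "(flat_deriv n has_real_derivative flat_deriv (Suc n) 0) (at 0)"
proof -
  let ?q = "\<lambda>t. (flat_deriv n t - flat_deriv n 0) / (t - 0)"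
  have "((\<lambda>t. poly ([:0, 1:] * flat_poly n) (1/t) * exp (- (1/t))) \<longlongrightarrow> 0) (at_right 0)"
    by (rule poly_inverse_times_exp_tendsto_0)
  then have "(?q \<longlongrightarrow> 0) (at_right 0)"
    by (rule Lim_transform_eventually)
       (auto simp: flat_deriv_def intro!: eventually_mono[OF eventually_at_right_less])
  moreover have "(?q \<longlongrightarrow> 0) (at_left 0)"
    by (rule Lim_transform_eventually[where f="\<lambda>_. 0"])
       (auto simp: flat_deriv_def intro!: eventually_mono[OF eventually_at_left_real[of "-1" 0]])
  ultimately have "(?q \<longlongrightarrow> 0) (at 0)"
    by (rule filterlim_split_at[rotated])
  then show ?thesis by (simp add: has_field_derivative_iff flat_deriv_def)
qed

lemma flat_deriv_has_real_derivative: "(flat_deriv n has_real_derivative flat_deriv (Suc n) t) (at t)"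
proof -
  consider "t > 0" | "t < 0" | "t = 0" by linarith
  then show ?thesis
  proof cases
    case 1
    let ?P = "flat_poly n"
    have "((\<lambda>t. poly ?P (1/t) * exp (- (1/t))) has_real_derivative
        poly (pderiv ?P) (1/t) * (- 1/t\<^sup>2) * exp (- (1/t)) + poly ?P (1/t) * (exp (- (1/t)) * (1/t\<^sup>2))) (at t)"
      using 1 by (auto intro!: derivative_eq_intros DERIV_chain2[OF poly_DERIV]
          simp: power2_eq_square field_simps)
    also have "poly (pderiv ?P) (1/t) * (- 1/t\<^sup>2) * exp (- (1/t)) + poly ?P (1/t) * (exp (- (1/t)) * (1/t\<^sup>2))
        = flat_deriv (Suc n) t"
      using 1 by (simp add: flat_deriv_def algebra_simps power2_eq_square)
    finally show ?thesis
      by (rule has_field_derivative_transform_within_open[where S="{0<..}"])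
         (use 1 in \<open>auto simp: flat_deriv_def\<close>)
  next
    case 2
    have "((\<lambda>_. 0) has_real_derivative flat_deriv (Suc n) t) (at t)"
      using 2 by (simp add: flat_deriv_def)
    then show ?thesis
      by (rule has_field_derivative_transform_within_open[where S="{..<0}"])
         (use 2 in \<open>auto simp: flat_deriv_def\<close>)
  next
    case 3
    then show ?thesis using flat_deriv_has_real_derivative_at_0 by simp
  qed
qed

text \<open>Closure under \<open>pd\<close> makes this algebra a supply of smooth functions without any general
  \<open>C\<^sup>\<infinity>\<close> calculus.\<close>

inductive_set ridge_alg :: "(R4 \<Rightarrow> real) set" where
  ridge: "(\<lambda>x. flat_deriv n (c * x $ k + d)) \<in> ridge_alg"
| const: "(\<lambda>x. c) \<in> ridge_alg"
| add: "f \<in> ridge_alg \<Longrightarrow> g \<in> ridge_alg \<Longrightarrow> (\<lambda>x. f x + g x) \<in> ridge_alg"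
| mult: "f \<in> ridge_alg \<Longrightarrow> g \<in> ridge_alg \<Longrightarrow> (\<lambda>x. f x * g x) \<in> ridge_alg"

lemma pd_eq_derivative: "(f has_derivative F) (at x) \<Longrightarrow> pd i f x = F (axis i 1)"
  unfolding pd_def by (metis frechet_derivative_at)

lemma ridge_alg_derivative:
  assumes "f \<in> ridge_alg"
  obtains F where "\<And>x. (f has_derivative F x) (at x)" "\<And>i. (\<lambda>x. F x (axis i 1)) \<in> ridge_alg"
proof -
  from assms have "\<exists>F. (\<forall>x. (f has_derivative F x) (at x)) \<and> (\<forall>i. (\<lambda>x. F x (axis i 1)) \<in> ridge_alg)"
  proof induction
    case (ridge n c k d)
    have "((\<lambda>x. flat_deriv n (c * x $ k + d)) has_derivative
        (\<lambda>h. flat_deriv (Suc n) (c * x $ k + d) * (c * h $ k))) (at x)" for x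
    proof -
      have "((\<lambda>x::R4. c * x $ k + d) has_derivative (\<lambda>h. c * h $ k)) (at x)"
        by (auto intro!: derivative_eq_intros bounded_linear_imp_has_derivative bounded_linear_vec_nth)
      from has_derivative_compose[OF this flat_deriv_has_real_derivative[unfolded has_field_derivative_def]]
      show ?thesis by (simp add: o_def)
    qed
    moreover have "(\<lambda>x. flat_deriv (Suc n) (c * x $ k + d) * (c * axis i 1 $ k)) \<in> ridge_alg" for i
      by (intro ridge_alg.mult ridge_alg.ridge ridge_alg.const)
    ultimately show ?case
      by (intro exI[of _ "\<lambda>x h. flat_deriv (Suc n) (c * x $ k + d) * (c * h $ k)"]) auto
  next
    case (const c)
    show ?case by (intro exI[of _ "\<lambda>x h. 0"]) (auto intro: ridge_alg.const)
  next
    case (add f g)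
    then obtain F G where "\<forall>x. (f has_derivative F x) (at x)" "\<forall>i. (\<lambda>x. F x (axis i 1)) \<in> ridge_alg"
      "\<forall>x. (g has_derivative G x) (at x)" "\<forall>i. (\<lambda>x. G x (axis i 1)) \<in> ridge_alg" by blast
    then show ?case
      by (intro exI[of _ "\<lambda>x h. F x h + G x h"]) (auto intro!: has_derivative_add ridge_alg.add)
  next
    case (mult f g)
    then obtain F G where "\<forall>x. (f has_derivative F x) (at x)" "\<forall>i. (\<lambda>x. F x (axis i 1)) \<in> ridge_alg"
      "\<forall>x. (g has_derivative G x) (at x)" "\<forall>i. (\<lambda>x. G x (axis i 1)) \<in> ridge_alg" by blast
    then show ?case
      by (intro exI[of _ "\<lambda>x h. f x * G x h + F x h * g x"])
         (auto intro!: has_derivative_mult ridge_alg.add ridge_alg.mult mult.hyps)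
  qed
  then obtain F where "\<forall>x. (f has_derivative F x) (at x)" "\<forall>i. (\<lambda>x. F x (axis i 1)) \<in> ridge_alg"
    by blast
  then show ?thesis by (intro that) auto
qed

lemma ridge_alg_differentiable: "f \<in> ridge_alg \<Longrightarrow> f differentiable (at x)"
  by (metis ridge_alg_derivative differentiable_def)

lemma continuous_on_ridge_alg: "f \<in> ridge_alg \<Longrightarrow> continuous_on UNIV f"
  by (meson ridge_alg_differentiable differentiable_imp_continuous_within continuous_at_imp_continuous_on)

lemma pd_ridge_alg: "f \<in> ridge_alg \<Longrightarrow> pd i f \<in> ridge_alg"
proof -
  assume "f \<in> ridge_alg"
  then obtain F where "\<And>x. (f has_derivative F x) (at x)" "\<And>i. (\<lambda>x. F x (axis i 1)) \<in> ridge_alg"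
    using ridge_alg_derivative[of f] by metis
  moreover from this have "pd i f = (\<lambda>x. F x (axis i 1))" using pd_eq_derivative by blast
  ultimately show ?thesis by simp
qed

lemma smooth_ridge_alg: "f \<in> ridge_alg \<Longrightarrow> smooth f"
proof -
  assume "f \<in> ridge_alg"
  then have "pderivs is f \<in> ridge_alg" for "is"
    by (induction "is") (auto intro: pd_ridge_alg)
  then show ?thesis unfolding smooth_def using ridge_alg_differentiable by blast
qed

lemma prod_ridge_alg: "(\<And>j. j \<in> A \<Longrightarrow> f j \<in> ridge_alg) \<Longrightarrow> (\<lambda>x. \<Prod>j\<in>A. f j x) \<in> ridge_alg"
proof (induction A rule: infinite_finite_induct)
  case (infinite A)
  then show ?case using ridge_alg.const[of 1] by simp
next
  case empty
  then show ?case using ridge_alg.const[of 1] by simp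
next
  case (insert a A)
  then show ?case by (auto intro!: ridge_alg.mult)
qed

section \<open>Integrals of compactly supported functions\<close>

lemma lebesgue_measurable_continuous_on:
  fixes f :: "'a::euclidean_space \<Rightarrow> real"
  shows "continuous_on UNIV f \<Longrightarrow> f \<in> borel_measurable lebesgue"
  by (intro measurable_completion) (simp add: borel_measurable_continuous_onI)

lemma bounded_continuous_compact_support:
  fixes g :: "'a::euclidean_space \<Rightarrow> real"
  assumes "continuous_on UNIV g" "compact K" "\<And>x. x \<notin> K \<Longrightarrow> g x = 0"
  obtains M where "M \<ge> 0" "\<And>x. \<bar>g x\<bar> \<le> M"
proof -
  have "compact (g ` K)"
    using assms by (meson compact_continuous_image continuous_on_subset subset_UNIV)
  then obtain M where "\<forall>y\<in>g ` K. \<bar>y\<bar> \<le> M"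
    using compact_imp_bounded bounded_iff by (metis real_norm_def)
  then have "\<bar>g x\<bar> \<le> max M 0" for x
    using assms(3)[of x] by (cases "x \<in> K") auto
  then show ?thesis using that[of "max M 0"] by simp
qed

lemma abs_le_1_plus_abs_power: "n \<noteq> 0 \<Longrightarrow> \<bar>t::real\<bar> \<le> 1 + \<bar>t\<bar> ^ n"
proof (cases "\<bar>t\<bar> \<le> 1")
  case True
  then show ?thesis using zero_le_power[of "\<bar>t\<bar>" n] by linarith
next
  case False
  moreover assume "n \<noteq> 0"
  ultimately show ?thesis using self_le_power[of "\<bar>t\<bar>" n] by linarith
qed

text \<open>The slack \<open>1 + F\<close> lets \<open>f\<close> range over \<open>L\<^sup>2\<close> or \<open>L\<^sup>4\<close> functions, taking \<open>F = \<bar>f\<bar>\<^sup>2\<close> or \<open>F = f\<^sup>4\<close>.\<close>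

lemma integrable_mult_bounded_support:
  fixes f g F :: "'a::euclidean_space \<Rightarrow> real"
  assumes f: "f \<in> borel_measurable lebesgue" "integrable lebesgue F" "\<And>x. \<bar>f x\<bar> \<le> 1 + F x"
    and g: "g \<in> borel_measurable lebesgue" "\<And>x. \<bar>g x\<bar> \<le> M" "S \<in> lmeasurable" "\<And>x. x \<notin> S \<Longrightarrow> g x = 0"
  shows "integrable lebesgue (\<lambda>x. f x * g x)"
proof (rule Bochner_Integration.integrable_bound[where f="\<lambda>x. M * (F x + indicator S x)"])
  show "integrable lebesgue (\<lambda>x. M * (F x + indicator S x))"
    using f(2) g(3) by (simp add: lmeasurable_iff_integrable)
  show "(\<lambda>x. f x * g x) \<in> borel_measurable lebesgue"
    using f(1) g(1) by (rule borel_measurable_times)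
  have "norm (f x * g x) \<le> norm (M * (F x + indicator S x))" for x
  proof (cases "x \<in> S")
    case True
    have "norm (f x * g x) \<le> (1 + F x) * M"
      using g(2)[of x] f(3)[of x] by (auto simp: abs_mult intro!: mult_mono)
    then show ?thesis using True by (simp add: algebra_simps)
  qed (use g(4) in simp)
  then show "AE x in lebesgue. norm (f x * g x) \<le> norm (M * (F x + indicator S x))" by simp
qed

lemma integrable_mult_compact_support:
  fixes f g F :: "'a::euclidean_space \<Rightarrow> real"
  assumes f: "f \<in> borel_measurable lebesgue" "integrable lebesgue F" "\<And>x. \<bar>f x\<bar> \<le> 1 + F x"
    and g: "continuous_on UNIV g" "compact K" "\<And>x. x \<notin> K \<Longrightarrow> g x = 0"
  shows "integrable lebesgue (\<lambda>x. f x * g x)"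
proof -
  obtain M where "M \<ge> 0" "\<And>x. \<bar>g x\<bar> \<le> M" by (rule bounded_continuous_compact_support[OF g]) auto
  from integrable_mult_bounded_support[OF f lebesgue_measurable_continuous_on[OF g(1)] this(2)
      lmeasurable_compact[OF g(2)] g(3)]
  show ?thesis .
qed

lemma integrable_continuous_compact_support:
  fixes w :: "'a::euclidean_space \<Rightarrow> real"
  assumes "continuous_on UNIV w" "compact K" "\<And>y. y \<notin> K \<Longrightarrow> w y = 0"
  shows "integrable lebesgue w"
  using integrable_mult_compact_support[where f="\<lambda>_. 1" and F="\<lambda>_. 0", OF _ _ _ assms] by simp

lemma lebesgue_integral_translate:
  fixes f :: "'a::euclidean_space \<Rightarrow> real"
  assumes [measurable]: "f \<in> borel_measurable borel"
  shows "(LINT x|lebesgue. f (t + x)) = (LINT x|lebesgue. f x)"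
proof -
  have "(LINT x|lebesgue. f (t + x)) = (LINT x|lborel. f (t + x))"
    by (rule integral_completion) measurable
  also have "\<dots> = integral\<^sup>L (distr lborel borel ((+) t)) f"
    by (rule integral_distr[symmetric]) measurable
  also have "\<dots> = (LINT x|lebesgue. f x)"
    by (simp add: lborel_distr_plus integral_completion)
  finally show ?thesis .
qed

lemma has_real_derivative_along_line:
  assumes "(w has_derivative W) (at (x + t *\<^sub>R e))"
  shows "((\<lambda>t. w (x + t *\<^sub>R e)) has_real_derivative W e) (at t)"
proof -
  have "((\<lambda>t. x + t *\<^sub>R e) has_derivative (\<lambda>s. s *\<^sub>R e)) (at t)"
    by (auto intro!: derivative_eq_intros)
  from has_derivative_compose[OF this assms]
  have "((\<lambda>t. w (x + t *\<^sub>R e)) has_derivative (\<lambda>s. W (s *\<^sub>R e))) (at t)" by (simp add: o_def)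
  moreover have "W (s *\<^sub>R e) = W e * s" for s
    using linear_scale[OF has_derivative_linear[OF assms]] by simp
  ultimately show ?thesis by (simp add: has_field_derivative_def)
qed

lemma has_derivative_0_outside:
  assumes "closed K" "\<And>y. y \<notin> K \<Longrightarrow> f y = 0" "x \<notin> K"
  shows "(f has_derivative (\<lambda>_. 0)) (at x)"
proof (rule has_derivative_transform_within_open[where s="- K"])
  show "((\<lambda>_. 0) has_derivative (\<lambda>_. 0)) (at x)" by simp
qed (use assms in auto)

lemma integral_difference_quotient_eq_0:
  fixes w :: "'a::euclidean_space \<Rightarrow> real"
  assumes wc: "continuous_on UNIV w" and supp: "compact K" "\<And>y. y \<notin> K \<Longrightarrow> w y = 0"
  shows "(LINT y|lebesgue. (w (y + t *\<^sub>R e) - w y) / t) = 0"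
proof -
  have "continuous_on UNIV (\<lambda>y. w (y + t *\<^sub>R e))"
    by (intro continuous_on_compose2[OF wc] continuous_intros) auto
  moreover have "compact ((\<lambda>y. y - t *\<^sub>R e) ` K)"
    by (intro compact_continuous_image[OF _ supp(1)] continuous_intros)
  moreover have "w (y + t *\<^sub>R e) = 0" if "y \<notin> (\<lambda>y. y - t *\<^sub>R e) ` K" for y
    using that by (intro supp(2)) (auto simp: image_iff algebra_simps)
  ultimately have "integrable lebesgue (\<lambda>y. w (y + t *\<^sub>R e))"
    by (rule integrable_continuous_compact_support)
  moreover have "integrable lebesgue w" by (rule integrable_continuous_compact_support[OF wc supp])
  moreover have "(LINT y|lebesgue. w (y + t *\<^sub>R e)) = (LINT y|lebesgue. w y)"
    using lebesgue_integral_translate[of w "t *\<^sub>R e"] borel_measurable_continuous_onI[OF wc]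
    by (simp add: add.commute)
  ultimately show ?thesis by simp
qed

lemma abs_difference_quotient_le:
  assumes der: "\<And>y. (w has_derivative W y) (at y)" and M: "\<And>y. \<bar>W y e\<bar> \<le> M" and "0 < t"
  shows "\<bar>(w (y + t *\<^sub>R e) - w y) / t\<bar> \<le> M"
proof -
  have "((\<lambda>t. w (y + t *\<^sub>R e)) has_real_derivative W (y + s *\<^sub>R e) e) (at s)" for s
    by (intro has_real_derivative_along_line der)
  from MVT2[OF \<open>0 < t\<close> this]
  obtain s where "w (y + t *\<^sub>R e) - w (y + 0 *\<^sub>R e) = (t - 0) * W (y + s *\<^sub>R e) e"
    by blast
  then show ?thesis using M[of "y + s *\<^sub>R e"] \<open>0 < t\<close> by simp
qed

text \<open>The difference quotients of \<open>w\<close> in direction \<open>e\<close> have integral \<open>0\<close> by translation invariance,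
  are dominated by the mean value theorem, and converge to the directional derivative.\<close>

lemma integral_directional_derivative_eq_0:
  fixes w :: "'a::euclidean_space \<Rightarrow> real"
  assumes der: "\<And>y. (w has_derivative W y) (at y)"
    and cont: "continuous_on UNIV (\<lambda>y. W y e)"
    and supp: "compact K" "\<And>y. y \<notin> K \<Longrightarrow> w y = 0"
  shows "(LINT y|lebesgue. W y e) = 0"
proof -
  have wc: "continuous_on UNIV w"
    by (intro continuous_at_imp_continuous_on ballI has_derivative_continuous[OF der])
  have "W y e = 0" if "y \<notin> K" for y
    using has_derivative_unique[OF der has_derivative_0_outside[OF compact_imp_closed[OF supp(1)] supp(2) that]]
    by simp
  from bounded_continuous_compact_support[OF cont supp(1) this]
  obtain M where M: "\<And>y. \<bar>W y e\<bar> \<le> M" by metis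
  from compact_imp_bounded[OF supp(1)] obtain R where R: "\<And>y. y \<in> K \<Longrightarrow> norm y \<le> R"
    unfolding bounded_iff by blast
  define L where "L = cball (0::'a) (R + norm e)"
  have wL: "w (y + c *\<^sub>R e) = 0" if "y \<notin> L" "\<bar>c\<bar> \<le> 1" for y c
  proof (rule supp(2), rule notI)
    assume "y + c *\<^sub>R e \<in> K"
    then have "norm (y + c *\<^sub>R e) \<le> R" by (rule R)
    moreover have "norm (c *\<^sub>R e) \<le> norm e" using that(2) by (simp add: mult_left_le_one_le)
    ultimately have "norm y \<le> R + norm e" using norm_triangle_ineq4[of "y + c *\<^sub>R e" "c *\<^sub>R e"] by simp
    then show False using that(1) by (simp add: L_def)
  qed
  define h where "h n = 1 / (real n + 1)" for n :: nat
  have h: "0 < h n" "h n \<le> 1" for n by (auto simp: h_def)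
  define q where "q n y = (w (y + h n *\<^sub>R e) - w y) / h n" for n y
  have "(\<lambda>n. LINT y|lebesgue. q n y) \<longlonglongrightarrow> (LINT y|lebesgue. W y e)"
  proof (rule integral_dominated_convergence[where w="\<lambda>y. M * indicator L y"])
    show "(\<lambda>y. W y e) \<in> borel_measurable lebesgue" by (rule lebesgue_measurable_continuous_on[OF cont])
    show "q n \<in> borel_measurable lebesgue" for n
      unfolding q_def by (intro lebesgue_measurable_continuous_on continuous_intros
          continuous_on_compose2[OF wc]) (use h(1)[of n] in auto)
    show "integrable lebesgue (\<lambda>y. M * indicator L y)"
      using lmeasurable_cball[of "0::'a" "R + norm e"] by (simp add: L_def lmeasurable_iff_integrable)
    have "h \<longlonglongrightarrow> 0"
      unfolding h_def using LIMSEQ_inverse_real_of_nat by (simp add: inverse_eq_divide add.commute)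
    then have "filterlim h (at 0) sequentially"
      using h(1) by (intro filterlim_atI) (auto simp: less_imp_neq[symmetric])
    moreover have "((\<lambda>t. (w (y + t *\<^sub>R e) - w y) / t) \<longlongrightarrow> W y e) (at 0)" for y
      using has_real_derivative_along_line[of w "W y" y 0 e] der by (simp add: has_field_derivative_iff)
    ultimately have "(\<lambda>n. q n y) \<longlonglongrightarrow> W y e" for y
      unfolding q_def by (rule filterlim_compose[rotated])
    then show "AE y in lebesgue. (\<lambda>n. q n y) \<longlonglongrightarrow> W y e" by simp
    have "norm (q n y) \<le> M * indicator L y" for n y
      using abs_difference_quotient_le[OF der M h(1)[of n], of y] wL[of y 0] wL[of y "h n"] h[of n]
      by (cases "y \<in> L") (simp_all add: q_def abs_of_pos)
    then show "AE y in lebesgue. norm (q n y) \<le> M * indicator L y" for n by simp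
  qed
  moreover have "(LINT y|lebesgue. q n y) = 0" for n
    unfolding q_def by (rule integral_difference_quotient_eq_0[OF wc supp])
  ultimately have "(\<lambda>n. 0) \<longlonglongrightarrow> (LINT y|lebesgue. W y e)" by simp
  then show ?thesis using LIMSEQ_unique tendsto_const by metis
qed

lemma eq_0_outside_closure_support: "x \<notin> closure {x. \<phi> x \<noteq> 0} \<Longrightarrow> \<phi> x = 0"
  using closure_subset[of "{x. \<phi> x \<noteq> 0}"] by auto

lemma pd_eq_0_outside_closure_support:
  assumes "x \<notin> closure {x. \<phi> x \<noteq> 0}"
  shows "pd i \<phi> x = 0"
proof -
  have "(\<phi> has_derivative (\<lambda>_. 0)) (at x)"
    by (rule has_derivative_0_outside[OF closed_closure _ assms]) (rule eq_0_outside_closure_support)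
  then show ?thesis by (simp add: pd_eq_derivative)
qed

lemma test_fn_differentiable: "test_fn \<phi> \<Longrightarrow> \<phi> differentiable (at x)"
  unfolding test_fn_def smooth_def by (metis pderivs.simps(1))

lemma test_fn_continuous_on: "test_fn \<phi> \<Longrightarrow> continuous_on UNIV \<phi>"
  by (meson test_fn_differentiable differentiable_imp_continuous_within continuous_at_imp_continuous_on)

lemma test_fn_continuous_on_pd: "test_fn \<phi> \<Longrightarrow> continuous_on UNIV (pd i \<phi>)"
proof -
  assume "test_fn \<phi>"
  then have "pderivs [i] \<phi> differentiable (at x)" for x
    unfolding test_fn_def smooth_def by blast
  then show ?thesis
    by (simp add: differentiable_imp_continuous_within continuous_at_imp_continuous_on)
qed

lemma integrable_mult_test_fn:
  assumes "f \<in> borel_measurable lebesgue" "integrable lebesgue F" "\<And>x. \<bar>f x\<bar> \<le> 1 + F x"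
    and \<phi>: "test_fn \<phi>"
  shows "integrable lebesgue (\<lambda>x. f x * \<phi> x)" "integrable lebesgue (\<lambda>x. f x * pd i \<phi> x)"
proof -
  have K: "compact (closure {x. \<phi> x \<noteq> 0})" using \<phi> unfolding test_fn_def by (rule conjunct2)
  show "integrable lebesgue (\<lambda>x. f x * \<phi> x)"
    by (rule integrable_mult_compact_support[OF assms(1-3) test_fn_continuous_on[OF \<phi>] K
          eq_0_outside_closure_support[of _ \<phi>]])
  show "integrable lebesgue (\<lambda>x. f x * pd i \<phi> x)"
    by (rule integrable_mult_compact_support[OF assms(1-3) test_fn_continuous_on_pd[OF \<phi>] K
          pd_eq_0_outside_closure_support[of _ \<phi>]])
qed

lemma integrable_continuous_mult_test_fn:
  assumes "continuous_on UNIV g" and \<phi>: "test_fn \<phi>"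
  shows "integrable lebesgue (\<lambda>x. g x * \<phi> x)" "integrable lebesgue (\<lambda>x. g x * pd i \<phi> x)"
proof -
  have K: "compact (closure {x. \<phi> x \<noteq> 0})" using \<phi> unfolding test_fn_def by (rule conjunct2)
  show "integrable lebesgue (\<lambda>x. g x * \<phi> x)"
  proof (rule integrable_continuous_compact_support[OF _ K])
    show "continuous_on UNIV (\<lambda>x. g x * \<phi> x)"
      by (intro continuous_intros assms(1) test_fn_continuous_on[OF \<phi>])
    show "g x * \<phi> x = 0" if "x \<notin> closure {x. \<phi> x \<noteq> 0}" for x
      using eq_0_outside_closure_support[OF that] by simp
  qed
  show "integrable lebesgue (\<lambda>x. g x * pd i \<phi> x)"
  proof (rule integrable_continuous_compact_support[OF _ K])
    show "continuous_on UNIV (\<lambda>x. g x * pd i \<phi> x)"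
      by (intro continuous_intros assms(1) test_fn_continuous_on_pd[OF \<phi>])
    show "g x * pd i \<phi> x = 0" if "x \<notin> closure {x. \<phi> x \<noteq> 0}" for x
      using pd_eq_0_outside_closure_support[OF that] by simp
  qed
qed

definition bump :: "R4 \<Rightarrow> R4 \<Rightarrow> nat \<Rightarrow> R4 \<Rightarrow> real" where
  "bump a b n x =
    (\<Prod>k\<in>UNIV. flat_deriv 0 ((x$k - a$k) * (real n + 1)) * flat_deriv 0 ((b$k - x$k) * (real n + 1)))"

lemma bump_ridge_alg: "bump a b n \<in> ridge_alg"
proof -
  have affine: "(x$k - a$k) * (real n + 1) = (real n + 1) * x$k + (- (a$k * (real n + 1)))"
    "(b$k - x$k) * (real n + 1) = (- (real n + 1)) * x$k + (b$k * (real n + 1))" for x :: R4 and k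
    by (simp_all add: algebra_simps)
  show ?thesis
    unfolding bump_def affine by (intro prod_ridge_alg ridge_alg.mult ridge_alg.ridge)
qed

lemma bump_nonneg: "0 \<le> bump a b n x"
  unfolding bump_def by (intro prod_nonneg mult_nonneg_nonneg) (simp_all add: flat_deriv_0)

lemma bump_le_1: "bump a b n x \<le> 1"
  unfolding bump_def by (intro prod_le_1 conjI mult_nonneg_nonneg mult_le_one) (simp_all add: flat_deriv_0)

lemma bump_eq_0_outside_box: "x \<notin> box a b \<Longrightarrow> bump a b n x = 0"
proof -
  assume "x \<notin> box a b"
  then obtain k where "x$k \<le> a$k \<or> b$k \<le> x$k" by (auto simp: mem_box_cart not_less)
  then have "(x$k - a$k) * (real n + 1) \<le> 0 \<or> (b$k - x$k) * (real n + 1) \<le> 0"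
    using mult_nonpos_nonneg[of "x$k - a$k" "real n + 1"] mult_nonpos_nonneg[of "b$k - x$k" "real n + 1"]
    by linarith
  then have "flat_deriv 0 ((x$k - a$k) * (real n + 1)) * flat_deriv 0 ((b$k - x$k) * (real n + 1)) = 0"
    by (auto simp: flat_deriv_0)
  then show ?thesis unfolding bump_def by (intro prod_zero) auto
qed

lemma test_fn_bump: "test_fn (bump a b n)"
proof -
  have "{x. bump a b n x \<noteq> 0} \<subseteq> cbox a b"
    using bump_eq_0_outside_box box_subset_cbox by blast
  then have "closure {x. bump a b n x \<noteq> 0} \<subseteq> cbox a b"
    using closure_minimal closed_cbox by blast
  then have "compact (closure {x. bump a b n x \<noteq> 0})"
    by (meson bounded_cbox bounded_subset compact_closure closure_subset order_trans)
  then show ?thesis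
    unfolding test_fn_def using bump_ridge_alg smooth_ridge_alg by blast
qed

lemma bump_tendsto_indicator: "(\<lambda>n. bump a b n x) \<longlonglongrightarrow> indicator (box a b) x"
proof -
  have "(\<lambda>n. flat_deriv 0 (t * (real n + 1))) \<longlonglongrightarrow> (if t > 0 then 1 else 0)" for t
  proof (cases "t > 0")
    case True
    have "(\<lambda>n. inverse (real n + 1)) \<longlonglongrightarrow> 0"
      using LIMSEQ_inverse_real_of_nat by (simp add: add.commute)
    then have "(\<lambda>n. exp (- (inverse t * inverse (real n + 1)))) \<longlonglongrightarrow> exp (- (inverse t * 0))"
      by (intro tendsto_intros)
    moreover have "flat_deriv 0 (t * (real n + 1)) = exp (- (inverse t * inverse (real n + 1)))" for n
      using True by (simp add: flat_deriv_0 field_simps add_pos_nonneg)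
    ultimately show ?thesis using True by simp
  next
    case False
    then have "flat_deriv 0 (t * (real n + 1)) = 0" for n
      by (simp add: flat_deriv_0 zero_less_mult_iff)
    then show ?thesis using False by simp
  qed
  then have "(\<lambda>n. bump a b n x) \<longlonglongrightarrow>
      (\<Prod>k\<in>UNIV. (if x$k - a$k > 0 then 1 else 0) * (if b$k - x$k > 0 then 1 else 0))"
    unfolding bump_def by (intro tendsto_prod tendsto_mult)
  also have "(\<Prod>k\<in>UNIV. (if x$k - a$k > 0 then 1 else 0) * (if b$k - x$k > 0 then 1 else (0::real)))
      = indicator (box a b) x"
    by (auto simp: mem_box_cart indicator_def intro!: prod.neutral prod_zero)
  finally show ?thesis .
qed

lemma exists_nonzero_test_fn:
  obtains \<psi> :: "R4 \<Rightarrow> real" and x where "test_fn \<psi>" "\<psi> x \<noteq> 0"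
proof
  show "test_fn (bump 0 (\<chi> k. 1) 0)" by (rule test_fn_bump)
  show "bump 0 (\<chi> k. 1) 0 (\<chi> k. 1/2) \<noteq> 0" by (simp add: bump_def flat_deriv_0)
qed

section \<open>The fundamental lemma of the calculus of variations\<close>

lemma mem_box_real_One:
  "x \<in> box (- (r *\<^sub>R One)) (r *\<^sub>R One) \<longleftrightarrow> (\<forall>b\<in>Basis. \<bar>x \<bullet> b\<bar> < r)"
  by (auto simp: mem_box abs_less_iff)

lemma box_real_One_incseq: "incseq (\<lambda>n. box (- (real n *\<^sub>R One)) (real n *\<^sub>R One :: 'a::euclidean_space))"
proof (intro incseq_SucI subsetI)
  fix n x assume "x \<in> box (- (real n *\<^sub>R One)) (real n *\<^sub>R One :: 'a)"
  then have "\<bar>x \<bullet> b\<bar> < real (Suc n)" if "b \<in> Basis" for b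
    using that unfolding mem_box_real_One by force
  then show "x \<in> box (- (real (Suc n) *\<^sub>R One)) (real (Suc n) *\<^sub>R One)"
    unfolding mem_box_real_One by blast
qed

lemma UN_box_real_One: "(\<Union>n. box (- (real n *\<^sub>R One)) (real n *\<^sub>R One)) = (UNIV :: 'a::euclidean_space set)"
proof (intro set_eqI iffI UNIV_I)
  fix x :: 'a
  obtain n where n: "norm x < real n" using reals_Archimedean2 by blast
  have "x \<in> box (- (real n *\<^sub>R One)) (real n *\<^sub>R One)"
    unfolding mem_box_real_One by (intro ballI le_less_trans[OF Basis_le_norm n])
  then show "x \<in> (\<Union>n. box (- (real n *\<^sub>R One)) (real n *\<^sub>R One))" by (rule UN_I[OF UNIV_I])
qed

lemma set_integral_eq_0_if_set_integral_box_eq_0: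
  fixes f :: "'a::euclidean_space \<Rightarrow> real"
  assumes f: "integrable lborel f" and box: "\<And>a b. (LINT x:box a b|lborel. f x) = 0"
    and A: "A \<in> sets borel"
  shows "(LINT x:A|lborel. f x) = 0"
proof -
  let ?G = "range (\<lambda>(a, b). box a b) :: 'a set set"
  let ?B = "\<lambda>n. box (- (real n *\<^sub>R One)) (real n *\<^sub>R One) :: 'a set"
  have sets: "sets borel = sigma_sets UNIV ?G"
    by (simp add: borel_eq_box sets_measure_of)
  have si: "set_integrable lborel A f" if "A \<in> sets lborel" for A
    unfolding set_integrable_def by (rule integrable_mult_indicator[OF that f])
  have "(\<lambda>n. LINT x:?B n|lborel. f x) \<longlonglongrightarrow> (LINT x:(\<Union>n. ?B n)|lborel. f x)"
    by (rule set_integral_cont_up[OF _ box_real_One_incseq si]) auto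
  then have "(\<lambda>n. 0) \<longlonglongrightarrow> (LINT x:UNIV|lborel. f x)"
    by (simp only: box UN_box_real_One)
  then have total: "(LINT x:UNIV|lborel. f x) = 0"
    using LIMSEQ_unique tendsto_const by metis
  have "Int_stable ?G" by (auto simp: Int_stable_def box_Int_box)
  moreover have "?G \<subseteq> Pow UNIV" by simp
  moreover have "A \<in> sigma_sets UNIV ?G" using A by (simp add: sets)
  ultimately show ?thesis
  proof (induction rule: sigma_sets_induct_disjoint)
    case (basic A)
    then show ?case using box by auto
  next
    case empty
    show ?case by (simp add: set_lebesgue_integral_def)
  next
    case (compl A)
    then have "A \<in> sets lborel" by (simp add: sets)
    then have "(LINT x:A \<union> (UNIV - A)|lborel. f x) = (LINT x:A|lborel. f x) + (LINT x:UNIV - A|lborel. f x)"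
      by (intro set_integral_Un si) auto
    then show ?case using total compl.IH by simp
  next
    case (union A)
    then have "A i \<in> sets lborel" for i by (auto simp: sets)
    then have "(LINT x:(\<Union>i. A i)|lborel. f x) = (\<Sum>i. LINT x:A i|lborel. f x)"
      by (intro lebesgue_integral_countable_add si sets.countable_UN)
         (use union.hyps(1) in \<open>auto simp: disjoint_family_on_def\<close>)
    then show ?case using union.IH by simp
  qed
qed

lemma AE_eq_0_if_integral_indicator_box_eq_0:
  fixes f :: "'a::euclidean_space \<Rightarrow> real"
  assumes f: "integrable lebesgue f" and box: "\<And>a b. (LINT x|lebesgue. indicator (box a b) x * f x) = 0"
  shows "AE x in lebesgue. f x = 0"
proof -
  obtain f' where f'[measurable]: "f' \<in> borel_measurable borel" and ff': "AE x in lborel. f x = f' x"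
    using completion_ex_borel_measurable_real[OF borel_measurable_integrable[OF f]] by auto
  have f'_lebesgue: "f' \<in> borel_measurable lebesgue" by (intro measurable_completion) measurable
  have "integrable lebesgue f'"
    by (rule integrable_cong_AE_imp[OF f f'_lebesgue AE_completion[OF ff']])
  then have "integrable lborel f'" by (simp add: integrable_completion)
  moreover have "(LINT x:box a b|lborel. f' x) = 0" for a b
  proof -
    have "(LINT x:box a b|lborel. f' x) = (LINT x|lborel. indicator (box a b) x * f' x)"
      by (simp add: set_lebesgue_integral_def)
    also have "\<dots> = (LINT x|lebesgue. indicator (box a b) x * f' x)"
      by (rule integral_completion[symmetric]) measurable
    also have "\<dots> = (LINT x|lebesgue. indicator (box a b) x * f x)"
    proof (rule integral_cong_AE)
      show "(\<lambda>x. indicator (box a b) x * f' x) \<in> borel_measurable lebesgue"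
        using f'_lebesgue by (intro borel_measurable_times borel_measurable_indicator) auto
      show "(\<lambda>x. indicator (box a b) x * f x) \<in> borel_measurable lebesgue"
        using borel_measurable_integrable[OF f] by (intro borel_measurable_times borel_measurable_indicator) auto
      show "AE x in lebesgue. indicator (box a b) x * f' x = indicator (box a b) x * f x"
        using AE_completion[OF ff'] by eventually_elim simp
    qed
    finally show ?thesis using box by simp
  qed
  ultimately have "(LINT x:A|lborel. f' x) = (LINT x:A|lborel. 0)" if "A \<in> sets lborel" for A
    using set_integral_eq_0_if_set_integral_box_eq_0[of f' A] that by simp
  then have "AE x in lborel. f' x = 0"
    by (intro density_unique_real \<open>integrable lborel f'\<close>) auto
  then have "AE x in lborel. f x = 0" using ff' by eventually_elim simp
  then show ?thesis by (rule AE_completion)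
qed

lemma integral_mult_indicator_box_eq_0:
  fixes h :: "R4 \<Rightarrow> real"
  assumes h: "h \<in> borel_measurable lebesgue" "integrable lebesgue (\<lambda>x. h x * indicator (cbox a b) x)"
    and test: "\<And>\<phi>. test_fn \<phi> \<Longrightarrow> (LINT x|lebesgue. h x * \<phi> x) = 0"
  shows "(LINT x|lebesgue. h x * indicator (box a b) x) = 0"
proof -
  have "(\<lambda>n. LINT x|lebesgue. h x * bump a b n x) \<longlonglongrightarrow> (LINT x|lebesgue. h x * indicator (box a b) x)"
  proof (rule integral_dominated_convergence[where w="\<lambda>x. \<bar>h x * indicator (cbox a b) x\<bar>"])
    show "(\<lambda>x. h x * indicator (box a b) x) \<in> borel_measurable lebesgue"
      using h(1) by (intro borel_measurable_times borel_measurable_indicator) auto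
    show "(\<lambda>x. h x * bump a b n x) \<in> borel_measurable lebesgue" for n
      using h(1) lebesgue_measurable_continuous_on[OF continuous_on_ridge_alg[OF bump_ridge_alg]]
      by (rule borel_measurable_times)
    show "integrable lebesgue (\<lambda>x. \<bar>h x * indicator (cbox a b) x\<bar>)"
      using h(2) by (rule integrable_abs)
    show "AE x in lebesgue. (\<lambda>n. h x * bump a b n x) \<longlonglongrightarrow> h x * indicator (box a b) x"
      by (intro AE_I2 tendsto_mult tendsto_const bump_tendsto_indicator)
    have "norm (h x * bump a b n x) \<le> \<bar>h x * indicator (cbox a b) x\<bar>" for n x
    proof (cases "x \<in> box a b")
      case True
      then have "x \<in> cbox a b" using box_subset_cbox by blast
      then show ?thesis using bump_nonneg[of a b n x] bump_le_1[of a b n x]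
        by (simp add: abs_mult mult_left_le)
    qed (simp add: bump_eq_0_outside_box)
    then show "AE x in lebesgue. norm (h x * bump a b n x) \<le> \<bar>h x * indicator (cbox a b) x\<bar>" for n
      by simp
  qed
  moreover have "(LINT x|lebesgue. h x * bump a b n x) = 0" for n
    by (rule test[OF test_fn_bump])
  ultimately have "(\<lambda>n. 0) \<longlonglongrightarrow> (LINT x|lebesgue. h x * indicator (box a b) x)" by simp
  then show ?thesis using LIMSEQ_unique tendsto_const by metis
qed

lemma AE_eq_0_if_integral_mult_test_fn_eq_0:
  fixes h :: "R4 \<Rightarrow> real"
  assumes h: "h \<in> borel_measurable lebesgue" "\<And>a b. integrable lebesgue (\<lambda>x. h x * indicator (cbox a b) x)"
    and test: "\<And>\<phi>. test_fn \<phi> \<Longrightarrow> (LINT x|lebesgue. h x * \<phi> x) = 0"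
  shows "AE x in lebesgue. h x = 0"
proof -
  let ?B = "\<lambda>n::nat. box (- (real n *\<^sub>R One)) (real n *\<^sub>R One) :: R4 set"
  have "AE x in lebesgue. indicator (?B n) x * h x = 0" for n
  proof (rule AE_eq_0_if_integral_indicator_box_eq_0)
    show "integrable lebesgue (\<lambda>x. indicator (?B n) x * h x)"
    proof (rule Bochner_Integration.integrable_bound[OF integrable_abs[OF h(2)]])
      show "(\<lambda>x. indicator (?B n) x * h x) \<in> borel_measurable lebesgue"
        using h(1) by (intro borel_measurable_times borel_measurable_indicator) auto
      show "AE x in lebesgue. norm (indicator (?B n) x * h x)
          \<le> norm \<bar>h x * indicator (cbox (- (real n *\<^sub>R One)) (real n *\<^sub>R One)) x\<bar>"
        using box_subset_cbox by (intro AE_I2) (auto simp: indicator_def)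
    qed
    fix a b :: R4
    obtain a' b' where ab: "box a b \<inter> ?B n = box a' b'" using box_Int_box by blast
    have "indicator (box a b) x * (indicator (?B n) x * h x) = h x * indicator (box a' b') x" for x
      unfolding ab[symmetric] by (simp add: indicator_def)
    then have "(LINT x|lebesgue. indicator (box a b) x * (indicator (?B n) x * h x))
        = (LINT x|lebesgue. h x * indicator (box a' b') x)"
      by (intro Bochner_Integration.integral_cong refl)
    also have "\<dots> = 0" by (rule integral_mult_indicator_box_eq_0[OF h test])
    finally show "(LINT x|lebesgue. indicator (box a b) x * (indicator (?B n) x * h x)) = 0" .
  qed
  then have "AE x in lebesgue. \<forall>n. indicator (?B n) x * h x = 0"
    by (subst AE_all_countable) blast
  then show ?thesis
  proof eventually_elim
    case (elim x)
    obtain n where "x \<in> ?B n" using UN_box_real_One by blast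
    then show ?case using elim[rule_format, of n] by simp
  qed
qed

section \<open>Weak gradients\<close>

text \<open>Integration by parts against a test function: \<open>f \<phi>\<close> is \<open>C\<^sup>1\<close> with compact support.\<close>

lemma weak_grad_classical:
  assumes diff: "\<And>x. f differentiable (at x)" and cont: "\<And>i. continuous_on UNIV (pd i f)"
  shows "weak_grad f (\<lambda>x. \<chi> i. pd i f x)"
  unfolding weak_grad_def
proof (intro conjI allI impI)
  have "continuous_on UNIV (\<lambda>x. \<chi> i. pd i f x)"
    by (intro continuous_on_vec_lambda) (simp add: cont)
  then show "(\<lambda>x. \<chi> i. pd i f x) \<in> borel_measurable lebesgue"
    by (intro measurable_completion) (simp add: borel_measurable_continuous_onI)
  fix \<phi> i assume \<phi>: "test_fn \<phi>"
  let ?K = "closure {x. \<phi> x \<noteq> 0}"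
  have K: "compact ?K" using \<phi> unfolding test_fn_def by (rule conjunct2)
  have fc: "continuous_on UNIV f"
    by (meson diff differentiable_imp_continuous_within continuous_at_imp_continuous_on)
  define F where "F x = frechet_derivative f (at x)" for x
  define P where "P x = frechet_derivative \<phi> (at x)" for x
  have F: "(f has_derivative F x) (at x)" and P: "(\<phi> has_derivative P x) (at x)" for x
    unfolding F_def P_def
    by (rule frechet_derivative_works[THEN iffD1, OF diff],
        rule frechet_derivative_works[THEN iffD1, OF test_fn_differentiable[OF \<phi>]])
  have "(LINT y|lebesgue. f y * P y (axis i 1) + F y (axis i 1) * \<phi> y) = 0"
  proof (rule integral_directional_derivative_eq_0[OF has_derivative_mult[OF F P] _ K])
    show "continuous_on UNIV (\<lambda>y. f y * P y (axis i 1) + F y (axis i 1) * \<phi> y)"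
      unfolding pd_eq_derivative[OF F, symmetric] pd_eq_derivative[OF P, symmetric]
      by (intro continuous_intros fc cont test_fn_continuous_on[OF \<phi>] test_fn_continuous_on_pd[OF \<phi>])
    show "f y * \<phi> y = 0" if "y \<notin> ?K" for y
      using eq_0_outside_closure_support[OF that] by simp
  qed
  then have "(LINT y|lebesgue. f y * pd i \<phi> y + pd i f y * \<phi> y) = 0"
    by (simp add: pd_eq_derivative[OF F] pd_eq_derivative[OF P])
  moreover have "integrable lebesgue (\<lambda>y. f y * pd i \<phi> y)"
    by (rule integrable_continuous_mult_test_fn(2)[OF fc \<phi>])
  moreover have "integrable lebesgue (\<lambda>y. pd i f y * \<phi> y)"
    by (rule integrable_continuous_mult_test_fn(1)[OF cont \<phi>])
  ultimately show "(LINT x|lebesgue. f x * pd i \<phi> x) = - (LINT x|lebesgue. (\<chi> i. pd i f x) $ i * \<phi> x)"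
    by simp
qed

lemma weak_grad_measurable: "weak_grad u G \<Longrightarrow> G \<in> borel_measurable lebesgue"
  unfolding weak_grad_def by simp

lemma weak_grad_measurable_nth: "weak_grad u G \<Longrightarrow> (\<lambda>x. G x $ i) \<in> borel_measurable lebesgue"
  using measurable_compose[OF weak_grad_measurable borel_measurable_nth] by simp

lemma abs_nth_le_1_plus_norm_square: "\<bar>y $ i\<bar> \<le> 1 + (norm (y :: R4))\<^sup>2"
  using component_le_norm_cart[of y i] abs_le_1_plus_abs_power[of 2 "norm y"] by simp

lemma weak_grad_integrable_nth_mult:
  assumes "weak_grad u G" "integrable lebesgue (\<lambda>x. (norm (G x))\<^sup>2)"
  shows "test_fn \<phi> \<Longrightarrow> integrable lebesgue (\<lambda>x. G x $ i * \<phi> x)"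
    and "integrable lebesgue (\<lambda>x. G x $ i * indicator (cbox a b) x)"
proof -
  have Gi: "(\<lambda>x. G x $ i) \<in> borel_measurable lebesgue"
    by (rule weak_grad_measurable_nth[OF assms(1)])
  show "test_fn \<phi> \<Longrightarrow> integrable lebesgue (\<lambda>x. G x $ i * \<phi> x)"
    by (rule integrable_mult_test_fn(1)[OF Gi assms(2) abs_nth_le_1_plus_norm_square])
  show "integrable lebesgue (\<lambda>x. G x $ i * indicator (cbox a b) x)"
  proof (rule integrable_mult_bounded_support[OF Gi assms(2) abs_nth_le_1_plus_norm_square])
    show "indicator (cbox a b) \<in> borel_measurable lebesgue"
      by (rule borel_measurable_indicator[OF fmeasurableD[OF lmeasurable_cbox]])
  qed (auto simp: indicator_def)
qed

lemma weak_grad_unique: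
  assumes G: "weak_grad u G" "integrable lebesgue (\<lambda>x. (norm (G x))\<^sup>2)"
    and H: "weak_grad u H" "integrable lebesgue (\<lambda>x. (norm (H x))\<^sup>2)"
  shows "AE x in lebesgue. G x = H x"
proof -
  have "AE x in lebesgue. G x $ i - H x $ i = 0" for i
  proof (rule AE_eq_0_if_integral_mult_test_fn_eq_0)
    show "(\<lambda>x. G x $ i - H x $ i) \<in> borel_measurable lebesgue"
      using weak_grad_measurable_nth[OF G(1)] weak_grad_measurable_nth[OF H(1)] by (rule borel_measurable_diff)
    show "integrable lebesgue (\<lambda>x. (G x $ i - H x $ i) * indicator (cbox a b) x)" for a b
      using weak_grad_integrable_nth_mult(2)[OF G, of i a b] weak_grad_integrable_nth_mult(2)[OF H, of i a b]
      by (simp add: left_diff_distrib)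
    fix \<phi> assume \<phi>: "test_fn \<phi>"
    have "(LINT x|lebesgue. u x * pd i \<phi> x) = - (LINT x|lebesgue. G x $ i * \<phi> x)"
      "(LINT x|lebesgue. u x * pd i \<phi> x) = - (LINT x|lebesgue. H x $ i * \<phi> x)"
      using G(1) H(1) \<phi> unfolding weak_grad_def by simp_all
    then have "(LINT x|lebesgue. G x $ i * \<phi> x) = (LINT x|lebesgue. H x $ i * \<phi> x)" by simp
    then show "(LINT x|lebesgue. (G x $ i - H x $ i) * \<phi> x) = 0"
      using weak_grad_integrable_nth_mult(1)[OF G \<phi>, of i] weak_grad_integrable_nth_mult(1)[OF H \<phi>, of i]
      by (simp add: left_diff_distrib)
  qed
  then have "AE x in lebesgue. \<forall>i\<in>UNIV. G x $ i - H x $ i = 0"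
    by (intro AE_finite_allI) auto
  then show ?thesis by eventually_elim (simp add: vec_eq_iff)
qed

lemma weak_grad_scale:
  assumes "weak_grad u G"
  shows "weak_grad (\<lambda>x. c * u x) (\<lambda>x. c *\<^sub>R G x)"
  unfolding weak_grad_def
proof (intro conjI allI impI)
  show "(\<lambda>x. c *\<^sub>R G x) \<in> borel_measurable lebesgue"
    using weak_grad_measurable[OF assms] by measurable
  fix \<phi> i assume "test_fn \<phi>"
  then have "(LINT x|lebesgue. u x * pd i \<phi> x) = - (LINT x|lebesgue. G x $ i * \<phi> x)"
    using assms unfolding weak_grad_def by simp
  then show "(LINT x|lebesgue. c * u x * pd i \<phi> x) = - (LINT x|lebesgue. (c *\<^sub>R G x) $ i * \<phi> x)"
    by (simp add: mult.assoc)
qed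

lemma D12_measurable: "D12 u \<Longrightarrow> u \<in> borel_measurable lebesgue"
  unfolding D12_def by simp

lemma D12_integrable_power4: "D12 u \<Longrightarrow> integrable lebesgue (\<lambda>x. (u x) ^ 4)"
  unfolding D12_def by simp

lemma D12_integrable_mult_pd_test_fn:
  assumes "D12 u" "test_fn \<phi>"
  shows "integrable lebesgue (\<lambda>x. u x * pd i \<phi> x)"
proof (rule integrable_mult_test_fn(2)[OF D12_measurable[OF assms(1)] D12_integrable_power4[OF assms(1)] _ assms(2)])
  show "\<bar>u x\<bar> \<le> 1 + (u x) ^ 4" for x using abs_le_1_plus_abs_power[of 4 "u x"] by simp
qed

lemma D12_grad:
  assumes "D12 u"
  shows "weak_grad u (grad u)" "integrable lebesgue (\<lambda>x. (norm (grad u x))\<^sup>2)"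
proof -
  have "\<exists>G. weak_grad u G \<and> integrable lebesgue (\<lambda>x. (norm (G x))\<^sup>2)"
    using assms unfolding D12_def by simp
  then have "weak_grad u (grad u) \<and> integrable lebesgue (\<lambda>x. (norm (grad u x))\<^sup>2)"
    unfolding grad_def by (rule someI_ex)
  then show "weak_grad u (grad u)" "integrable lebesgue (\<lambda>x. (norm (grad u x))\<^sup>2)" by simp_all
qed

lemma D12I:
  assumes "u \<in> borel_measurable lebesgue" "integrable lebesgue (\<lambda>x. (u x) ^ 4)"
    and "weak_grad u G" "integrable lebesgue (\<lambda>x. (norm (G x))\<^sup>2)"
  shows "D12 u" and "dir u = (LINT x|lebesgue. (norm (G x))\<^sup>2)"
proof -
  show D: "D12 u" unfolding D12_def using assms by blast
  have "AE x in lebesgue. grad u x = G x"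
    by (rule weak_grad_unique[OF D12_grad[OF D] assms(3,4)])
  then have "AE x in lebesgue. (norm (grad u x))\<^sup>2 = (norm (G x))\<^sup>2" by eventually_elim simp
  moreover have "(\<lambda>x. (norm (grad u x))\<^sup>2) \<in> borel_measurable lebesgue"
    using weak_grad_measurable[OF D12_grad(1)[OF D]] by measurable
  moreover have "(\<lambda>x. (norm (G x))\<^sup>2) \<in> borel_measurable lebesgue"
    using weak_grad_measurable[OF assms(3)] by measurable
  ultimately show "dir u = (LINT x|lebesgue. (norm (G x))\<^sup>2)"
    unfolding dir_def by (rule integral_cong_AE[rotated 2])
qed

lemma L4p_scale: "L4p (\<lambda>x. c * u x) = c ^ 4 * L4p u"
  unfolding L4p_def by (simp add: power_mult_distrib)

lemma
  assumes "D12 u"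
  shows D12_scale: "D12 (\<lambda>x. c * u x)"
    and dir_scale: "dir (\<lambda>x. c * u x) = c\<^sup>2 * dir u"
proof -
  note G = D12_grad[OF assms]
  have "integrable lebesgue (\<lambda>x. (norm (c *\<^sub>R grad u x))\<^sup>2)"
    using G(2) by (simp add: power_mult_distrib)
  moreover have "(\<lambda>x. c * u x) \<in> borel_measurable lebesgue" "integrable lebesgue (\<lambda>x. (c * u x) ^ 4)"
    using D12_measurable[OF assms] D12_integrable_power4[OF assms] by (simp_all add: power_mult_distrib)
  ultimately have "D12 (\<lambda>x. c * u x)"
    and "dir (\<lambda>x. c * u x) = (LINT x|lebesgue. (norm (c *\<^sub>R grad u x))\<^sup>2)"
    using D12I weak_grad_scale[OF G(1)] by blast+
  then show "D12 (\<lambda>x. c * u x)" "dir (\<lambda>x. c * u x) = c\<^sup>2 * dir u"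
    by (simp_all add: power_mult_distrib dir_def)
qed

lemma weak_grad_add:
  assumes "D12 u" "D12 v"
  shows "weak_grad (\<lambda>x. u x + v x) (\<lambda>x. grad u x + grad v x)"
  unfolding weak_grad_def
proof (intro conjI allI impI)
  show "(\<lambda>x. grad u x + grad v x) \<in> borel_measurable lebesgue"
    using weak_grad_measurable[OF D12_grad(1)[OF assms(1)]] weak_grad_measurable[OF D12_grad(1)[OF assms(2)]]
    by (rule borel_measurable_add)
  fix \<phi> i assume \<phi>: "test_fn \<phi>"
  have "(LINT x|lebesgue. u x * pd i \<phi> x) = - (LINT x|lebesgue. grad u x $ i * \<phi> x)"
    "(LINT x|lebesgue. v x * pd i \<phi> x) = - (LINT x|lebesgue. grad v x $ i * \<phi> x)"
    using D12_grad(1)[OF assms(1)] D12_grad(1)[OF assms(2)] \<phi> unfolding weak_grad_def by simp_all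
  then show "(LINT x|lebesgue. (u x + v x) * pd i \<phi> x) = - (LINT x|lebesgue. (grad u x + grad v x) $ i * \<phi> x)"
    using D12_integrable_mult_pd_test_fn[OF assms(1) \<phi>, of i] D12_integrable_mult_pd_test_fn[OF assms(2) \<phi>, of i]
      weak_grad_integrable_nth_mult(1)[OF D12_grad[OF assms(1)] \<phi>, of i]
      weak_grad_integrable_nth_mult(1)[OF D12_grad[OF assms(2)] \<phi>, of i]
    by (simp add: distrib_right)
qed

lemma square_sum_le: "((a::'a::linordered_idom) + b)\<^sup>2 \<le> 2 * (a\<^sup>2 + b\<^sup>2)"
proof -
  have "2 * (a\<^sup>2 + b\<^sup>2) - (a + b)\<^sup>2 = (a - b)\<^sup>2" by (simp add: power2_eq_square algebra_simps)
  then show ?thesis using zero_le_power2[of "a - b"] by linarith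
qed

lemma power4_sum_le: "((a::'a::linordered_idom) + b) ^ 4 \<le> 8 * (a ^ 4 + b ^ 4)"
proof -
  have "(a + b) ^ 4 = ((a + b)\<^sup>2)\<^sup>2" by simp
  also have "\<dots> \<le> (2 * (a\<^sup>2 + b\<^sup>2))\<^sup>2" by (intro power_mono square_sum_le) simp
  also have "\<dots> = 4 * (a\<^sup>2 + b\<^sup>2)\<^sup>2" by (simp add: power2_eq_square algebra_simps)
  also have "\<dots> \<le> 4 * (2 * ((a\<^sup>2)\<^sup>2 + (b\<^sup>2)\<^sup>2))" using square_sum_le[of "a\<^sup>2" "b\<^sup>2"] by simp
  also have "\<dots> = 8 * (a ^ 4 + b ^ 4)" by simp
  finally show ?thesis .
qed

lemma
  assumes "D12 u" "D12 v"
  shows D12_add: "D12 (\<lambda>x. u x + v x)"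
    and dir_add: "dir (\<lambda>x. u x + v x) = (LINT x|lebesgue. (norm (grad u x + grad v x))\<^sup>2)"
proof -
  have "(\<lambda>x. u x + v x) \<in> borel_measurable lebesgue"
    using D12_measurable[OF assms(1)] D12_measurable[OF assms(2)] by (rule borel_measurable_add)
  moreover have "integrable lebesgue (\<lambda>x. (u x + v x) ^ 4)"
  proof (rule Bochner_Integration.integrable_bound[where f="\<lambda>x. 8 * ((u x) ^ 4 + (v x) ^ 4)"])
    show "integrable lebesgue (\<lambda>x. 8 * ((u x) ^ 4 + (v x) ^ 4))"
      using D12_integrable_power4[OF assms(1)] D12_integrable_power4[OF assms(2)] by simp
    show "(\<lambda>x. (u x + v x) ^ 4) \<in> borel_measurable lebesgue"
      using \<open>(\<lambda>x. u x + v x) \<in> borel_measurable lebesgue\<close> by measurable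
    show "AE x in lebesgue. norm ((u x + v x) ^ 4) \<le> norm (8 * ((u x) ^ 4 + (v x) ^ 4))"
      using power4_sum_le by (intro AE_I2) simp
  qed
  moreover have "integrable lebesgue (\<lambda>x. (norm (grad u x + grad v x))\<^sup>2)"
  proof (rule Bochner_Integration.integrable_bound[where f="\<lambda>x. 2 * ((norm (grad u x))\<^sup>2 + (norm (grad v x))\<^sup>2)"])
    show "integrable lebesgue (\<lambda>x. 2 * ((norm (grad u x))\<^sup>2 + (norm (grad v x))\<^sup>2))"
      using D12_grad(2)[OF assms(1)] D12_grad(2)[OF assms(2)] by simp
    show "(\<lambda>x. (norm (grad u x + grad v x))\<^sup>2) \<in> borel_measurable lebesgue"
      using weak_grad_measurable[OF weak_grad_add[OF assms]] by measurable
    have "(norm (grad u x + grad v x))\<^sup>2 \<le> 2 * ((norm (grad u x))\<^sup>2 + (norm (grad v x))\<^sup>2)" for x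
      using power_mono[OF norm_triangle_ineq norm_ge_zero, of _ _ 2] square_sum_le order_trans by blast
    then show "AE x in lebesgue. norm ((norm (grad u x + grad v x))\<^sup>2)
        \<le> norm (2 * ((norm (grad u x))\<^sup>2 + (norm (grad v x))\<^sup>2))" by simp
  qed
  ultimately show "D12 (\<lambda>x. u x + v x)"
    and "dir (\<lambda>x. u x + v x) = (LINT x|lebesgue. (norm (grad u x + grad v x))\<^sup>2)"
    using D12I[OF _ _ weak_grad_add[OF assms]] by blast+
qed

lemma dir_nonneg: "0 \<le> dir u"
  unfolding dir_def by (rule Bochner_Integration.integral_nonneg) simp

lemma L4p_nonneg: "0 \<le> L4p u"
  unfolding L4p_def by (rule Bochner_Integration.integral_nonneg) simp

lemma L4p_eq_0_iff: "D12 u \<Longrightarrow> L4p u = 0 \<longleftrightarrow> \<not> nonzero u"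
  unfolding L4p_def nonzero_def
  by (subst integral_nonneg_eq_0_iff_AE) (auto simp: D12_integrable_power4)

lemma cross_eq_0: "\<not> nonzero u \<Longrightarrow> cross u v = 0"
  unfolding nonzero_def cross_def by (auto intro: integral_eq_zero_AE)

lemma cross_self: "cross u u = L4p u"
  unfolding cross_def L4p_def by (simp add: power2_eq_square power4_eq_xxxx mult.assoc)

lemma mult_squares_le_weighted:
  fixes a b s :: real
  assumes "s > 0"
  shows "a\<^sup>2 * b\<^sup>2 \<le> (s * a ^ 4 + b ^ 4 / s) / 2"
proof -
  have "(s * a\<^sup>2 - b\<^sup>2)\<^sup>2 / s = s * a ^ 4 - 2 * a\<^sup>2 * b\<^sup>2 + b ^ 4 / s"
    using assms by (simp add: power2_eq_square field_simps) (simp add: algebra_simps numeral_eq_Suc)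
  moreover have "0 \<le> (s * a\<^sup>2 - b\<^sup>2)\<^sup>2 / s" using assms by simp
  ultimately show ?thesis by simp
qed

lemma integrable_cross:
  assumes "D12 u" "D12 v"
  shows "integrable lebesgue (\<lambda>x. (u x)\<^sup>2 * (v x)\<^sup>2)"
proof (rule Bochner_Integration.integrable_bound[where f="\<lambda>x. ((u x) ^ 4 + (v x) ^ 4) / 2"])
  show "integrable lebesgue (\<lambda>x. ((u x) ^ 4 + (v x) ^ 4) / 2)"
    using D12_integrable_power4[OF assms(1)] D12_integrable_power4[OF assms(2)] by simp
  show "(\<lambda>x. (u x)\<^sup>2 * (v x)\<^sup>2) \<in> borel_measurable lebesgue"
    using D12_measurable[OF assms(1)] D12_measurable[OF assms(2)] by measurable
  show "AE x in lebesgue. norm ((u x)\<^sup>2 * (v x)\<^sup>2) \<le> norm (((u x) ^ 4 + (v x) ^ 4) / 2)"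
    using mult_squares_le_weighted[of 1] by (intro AE_I2) simp
qed

text \<open>Cauchy-Schwarz for \<open>u\<^sup>2\<close> and \<open>v\<^sup>2\<close>, via the weighted AM-GM inequality with weight \<open>\<parallel>v\<parallel>\<^sub>4\<^sup>2 / \<parallel>u\<parallel>\<^sub>4\<^sup>2\<close>.\<close>

lemma cross_le:
  assumes "D12 u" "D12 v"
  shows "cross u v \<le> sqrt (L4p u) * sqrt (L4p v)"
proof (cases "nonzero u \<and> nonzero v")
  case True
  let ?A = "L4p u" and ?B = "L4p v"
  have A: "?A > 0" and B: "?B > 0"
    using L4p_eq_0_iff[OF assms(1)] L4p_eq_0_iff[OF assms(2)] L4p_nonneg[of u] L4p_nonneg[of v] True
    by fastforce+
  define s where "s = sqrt ?B / sqrt ?A"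
  have s: "s > 0" using A B by (simp add: s_def)
  have "cross u v \<le> (LINT x|lebesgue. (s * (u x) ^ 4 + (v x) ^ 4 / s) / 2)"
    unfolding cross_def
    by (intro integral_mono integrable_cross assms mult_squares_le_weighted s)
       (use D12_integrable_power4[OF assms(1)] D12_integrable_power4[OF assms(2)] in auto)
  also have "\<dots> = (s * ?A + ?B / s) / 2"
    unfolding L4p_def using D12_integrable_power4[OF assms(1)] D12_integrable_power4[OF assms(2)] by simp
  also have "\<dots> = sqrt ?A * sqrt ?B"
    using A B unfolding s_def by (simp add: field_simps)
  finally show ?thesis .
next
  case False
  then have "cross u v = 0"
    using cross_eq_0[of u v] cross_eq_0[of v u] by (auto simp: cross_def mult.commute)
  then show ?thesis using L4p_nonneg[of u] L4p_nonneg[of v] by simp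
qed

lemma integrable_norm_grad_test_fn:
  assumes "test_fn \<phi>"
  shows "integrable lebesgue (\<lambda>x. (norm (\<chi> i. pd i \<phi> x))\<^sup>2)"
proof (rule integrable_continuous_compact_support)
  show "compact (closure {x. \<phi> x \<noteq> 0})" using assms unfolding test_fn_def by (rule conjunct2)
  show "continuous_on UNIV (\<lambda>x. (norm (\<chi> i. pd i \<phi> x))\<^sup>2)"
    by (intro continuous_intros continuous_on_vec_lambda) (simp add: test_fn_continuous_on_pd[OF assms])
  show "(norm (\<chi> i. pd i \<phi> x))\<^sup>2 = 0" if "x \<notin> closure {x. \<phi> x \<noteq> 0}" for x
    using pd_eq_0_outside_closure_support[OF that] by (simp add: vec_eq_iff)
qed

lemma
  assumes "test_fn \<phi>"
  shows D12_test_fn: "D12 \<phi>"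
    and dir_test_fn: "dir \<phi> = (LINT x|lebesgue. (norm (\<chi> i. pd i \<phi> x))\<^sup>2)"
proof -
  have G: "weak_grad \<phi> (\<lambda>x. \<chi> i. pd i \<phi> x)"
    by (rule weak_grad_classical[OF test_fn_differentiable[OF assms] test_fn_continuous_on_pd[OF assms]])
  have "integrable lebesgue (\<lambda>x. (\<phi> x) ^ 4)"
  proof (rule integrable_continuous_compact_support)
    show "compact (closure {x. \<phi> x \<noteq> 0})" using assms unfolding test_fn_def by (rule conjunct2)
    show "continuous_on UNIV (\<lambda>x. (\<phi> x) ^ 4)"
      by (intro continuous_intros test_fn_continuous_on[OF assms])
    show "(\<phi> x) ^ 4 = 0" if "x \<notin> closure {x. \<phi> x \<noteq> 0}" for x
      using eq_0_outside_closure_support[OF that] by simp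
  qed
  from D12I[OF lebesgue_measurable_continuous_on[OF test_fn_continuous_on[OF assms]] this G
      integrable_norm_grad_test_fn[OF assms]]
  show "D12 \<phi>" "dir \<phi> = (LINT x|lebesgue. (norm (\<chi> i. pd i \<phi> x))\<^sup>2)" by simp_all
qed

lemma continuous_AE_eq_0:
  fixes f :: "'a::euclidean_space \<Rightarrow> real"
  assumes "continuous_on UNIV f" "AE x in lebesgue. f x = 0"
  shows "f x = 0"
proof -
  have "closed {x. f x = 0}"
    using continuous_closed_preimage_constant[OF assms(1) closed_UNIV, of 0] by simp
  moreover have "AE x \<in> UNIV in lebesgue. x \<in> {x. f x = 0}" using assms(2) by simp
  ultimately have "x \<in> {x. f x = 0}"
    using mem_closed_if_AE_lebesgue_open[of UNIV "{x. f x = 0}" x] by simp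
  then show ?thesis by simp
qed

lemma L4p_test_fn_pos:
  assumes "test_fn \<phi>" "\<phi> x \<noteq> 0"
  shows "0 < L4p \<phi>"
proof -
  have "nonzero \<phi>"
    unfolding nonzero_def
  proof
    assume "AE y in lebesgue. \<phi> y = 0"
    then have "\<phi> x = 0" by (rule continuous_AE_eq_0[OF test_fn_continuous_on[OF assms(1)]])
    then show False using assms(2) by simp
  qed
  then show ?thesis using L4p_eq_0_iff[OF D12_test_fn[OF assms(1)]] L4p_nonneg[of \<phi>] by linarith
qed

text \<open>A test function with vanishing gradient is constant, hence zero since its support is compact.\<close>

lemma dir_test_fn_pos:
  assumes "test_fn \<phi>" "\<phi> x \<noteq> 0"
  shows "0 < dir \<phi>"
proof (rule ccontr)
  let ?K = "closure {x. \<phi> x \<noteq> 0}"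
  assume "\<not> 0 < dir \<phi>"
  then have "(LINT x|lebesgue. (norm (\<chi> i. pd i \<phi> x))\<^sup>2) = 0"
    using dir_nonneg[of \<phi>] dir_test_fn[OF assms(1)] by linarith
  then have "AE y in lebesgue. (norm (\<chi> i. pd i \<phi> y))\<^sup>2 = 0"
    by (subst (asm) integral_nonneg_eq_0_iff_AE) (auto intro: integrable_norm_grad_test_fn[OF assms(1)])
  then have "(norm (\<chi> i. pd i \<phi> y))\<^sup>2 = 0" for y
    by (rule continuous_AE_eq_0[rotated])
       (intro continuous_intros continuous_on_vec_lambda, simp add: test_fn_continuous_on_pd[OF assms(1)])
  then have pd0: "pd i \<phi> y = 0" for i y
    by (simp add: vec_eq_iff)
  define F where "F y = frechet_derivative \<phi> (at y)" for y
  have F: "(\<phi> has_derivative F y) (at y)" for y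
    unfolding F_def by (rule frechet_derivative_works[THEN iffD1, OF test_fn_differentiable[OF assms(1)]])
  have F0: "F y = (\<lambda>h. 0)" for y
  proof (rule linear_eq_stdbasis)
    show "linear (F y)" by (rule has_derivative_linear[OF F])
    fix b :: R4 assume "b \<in> Basis"
    then obtain i where "b = axis i 1" using axis_inverse by blast
    then show "F y b = 0" using pd_eq_derivative[OF F, of i y] pd0[of i y] by simp
  qed (rule linear_zero)
  have "\<exists>c. \<forall>y\<in>UNIV. \<phi> y = c"
    by (rule has_derivative_zero_constant) (use F[unfolded F0] in simp_all)
  then obtain c where c: "\<forall>y. \<phi> y = c" by blast
  have "bounded ?K" using assms(1) unfolding test_fn_def by (simp add: compact_imp_bounded)
  then have "?K \<noteq> UNIV" using not_bounded_UNIV by metis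
  then obtain y where "y \<notin> ?K" by (metis UNIV_eq_I)
  then show False using c eq_0_outside_closure_support[of y \<phi>] assms(2) by simp
qed

section \<open>The Sobolev constant\<close>

lemma D12_normalize:
  assumes "D12 u" "0 < L4p u"
  obtains w where "D12 w" "L4p w = 1" "dir w = dir u / sqrt (L4p u)"
proof
  define c where "c = 1 / sqrt (sqrt (L4p u))"
  have c2: "c\<^sup>2 = 1 / sqrt (L4p u)" using assms(2) by (simp add: c_def power_divide)
  have "c ^ 4 = (c\<^sup>2)\<^sup>2" by simp
  also have "\<dots> = 1 / L4p u" using assms(2) by (simp add: c2 power_divide)
  finally have c4: "c ^ 4 = 1 / L4p u" .
  show "D12 (\<lambda>x. c * u x)" by (rule D12_scale[OF assms(1)])
  show "L4p (\<lambda>x. c * u x) = 1" using assms(2) by (simp add: L4p_scale c4)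
  show "dir (\<lambda>x. c * u x) = dir u / sqrt (L4p u)" by (simp add: dir_scale[OF assms(1)] c2)
qed

lemma exists_D12_L4p_eq_1: "\<exists>w. D12 w \<and> L4p w = 1"
proof -
  obtain \<psi> x where "test_fn \<psi>" "\<psi> x \<noteq> 0" by (rule exists_nonzero_test_fn)
  then obtain w where "D12 w" "L4p w = 1"
    using D12_normalize D12_test_fn L4p_test_fn_pos by metis
  then show ?thesis by blast
qed

lemma bdd_below_Sob_set: "bdd_below {dir u | u. D12 u \<and> L4p u = 1}"
  by (rule bdd_belowI[of _ 0]) (auto simp: dir_nonneg)

lemma Sob_le_dir: "D12 w \<Longrightarrow> L4p w = 1 \<Longrightarrow> Sob \<le> dir w"
  unfolding Sob_def by (rule cInf_lower[OF _ bdd_below_Sob_set]) blast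

lemma Sob_nonneg: "0 \<le> Sob"
  unfolding Sob_def using exists_D12_L4p_eq_1 by (intro cInf_greatest) (auto simp: dir_nonneg)

lemma exists_dir_less_Sob:
  assumes "0 < \<epsilon>"
  obtains w where "D12 w" "L4p w = 1" "dir w < Sob + \<epsilon>"
proof -
  have "Inf {dir u | u. D12 u \<and> L4p u = 1} < Sob + \<epsilon>" using assms by (simp add: Sob_def)
  then show ?thesis
    using that exists_D12_L4p_eq_1 by (subst (asm) cInf_less_iff[OF _ bdd_below_Sob_set]) auto
qed

lemma sobolev_inequality:
  assumes "D12 u"
  shows "Sob * sqrt (L4p u) \<le> dir u"
proof (cases "L4p u = 0")
  case True
  then show ?thesis using dir_nonneg[of u] by simp
next
  case False
  then have L: "0 < L4p u" using L4p_nonneg[of u] by linarith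
  obtain w where "D12 w" "L4p w = 1" "dir w = dir u / sqrt (L4p u)"
    by (rule D12_normalize[OF assms L])
  then have "Sob \<le> dir u / sqrt (L4p u)" using Sob_le_dir by metis
  then show ?thesis using L by (simp add: field_simps)
qed

section \<open>The Nehari sets\<close>

lemma Nstar_subset_Mstar: "Nstar \<beta> \<subseteq> Mstar \<beta>"
  unfolding Nstar_def Mstar_def by auto

lemma energy_Mstar:
  assumes "(u, v) \<in> Mstar \<beta>"
  shows "energy \<beta> u v = (dir u + dir v) / 4"
proof -
  have "dir u + dir v - L4p u - L4p v - 2 * \<beta> * cross u v = 0"
    using assms unfolding Mstar_def by auto
  then have "L4p u + L4p v + 2 * \<beta> * cross u v = dir u + dir v" by linarith
  then show ?thesis unfolding energy_def by (simp add: field_simps)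
qed

lemma nehari_lower_bound_real:
  fixes S p q D \<beta> :: real
  assumes "1 \<le> \<beta>" "0 \<le> S" "0 \<le> p" "0 \<le> q" "0 < p + q"
    and lower: "S * (p + q) \<le> D" and upper: "D \<le> p\<^sup>2 + q\<^sup>2 + 2 * \<beta> * (p * q)"
  shows "2 * S\<^sup>2 / (1 + \<beta>) \<le> D"
proof (cases "S = 0")
  case True
  then show ?thesis using lower by simp
next
  case False
  then have "0 < S * (p + q)" using assms(2,5) by simp
  then have D: "0 < D" using lower by linarith
  have "0 \<le> (\<beta> - 1) * (p - q)\<^sup>2" using assms(1) by simp
  then have "2 * D \<le> 2 * (p\<^sup>2 + q\<^sup>2 + 2 * \<beta> * (p * q)) + (\<beta> - 1) * (p - q)\<^sup>2"
    using upper by argo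
  also have "\<dots> = (1 + \<beta>) * (p + q)\<^sup>2"
    by (simp add: power2_eq_square algebra_simps)
  finally have "2 * D \<le> (1 + \<beta>) * (p + q)\<^sup>2" .
  then have "S\<^sup>2 * (2 * D) \<le> S\<^sup>2 * ((1 + \<beta>) * (p + q)\<^sup>2)"
    by (rule mult_left_mono) simp
  also have "\<dots> = (1 + \<beta>) * (S * (p + q))\<^sup>2" by (simp add: power_mult_distrib)
  also have "\<dots> \<le> (1 + \<beta>) * D\<^sup>2"
    using assms(1,2,3,4) lower by (intro mult_left_mono power_mono) simp_all
  finally have "(2 * S\<^sup>2) * D \<le> ((1 + \<beta>) * D) * D" by (simp add: power2_eq_square ac_simps)
  then have "2 * S\<^sup>2 \<le> (1 + \<beta>) * D" using D by (rule mult_right_le_imp_le)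
  then show ?thesis using assms(1) by (simp add: pos_divide_le_eq mult.commute)
qed

lemma energy_Mstar_ge:
  assumes "1 \<le> \<beta>" "(u, v) \<in> Mstar \<beta>"
  shows "Sob\<^sup>2 / (2 * (1 + \<beta>)) \<le> energy \<beta> u v"
proof -
  have u: "D12 u" and v: "D12 v" and nz: "nonzero u \<or> nonzero v"
    and nehari: "dir u + dir v = L4p u + L4p v + 2 * \<beta> * cross u v"
    using assms(2) unfolding Mstar_def by auto
  let ?p = "sqrt (L4p u)" and ?q = "sqrt (L4p v)"
  have "0 < L4p u \<or> 0 < L4p v"
    using nz L4p_eq_0_iff[OF u] L4p_eq_0_iff[OF v] L4p_nonneg[of u] L4p_nonneg[of v] by force
  then have "0 < ?p \<or> 0 < ?q" by simp
  moreover have p: "0 \<le> ?p" and q: "0 \<le> ?q" by (simp_all add: L4p_nonneg)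
  ultimately have pq: "0 < ?p + ?q" by linarith
  have lower: "Sob * (?p + ?q) \<le> dir u + dir v"
    using sobolev_inequality[OF u] sobolev_inequality[OF v] by (simp add: distrib_left)
  have upper: "dir u + dir v \<le> ?p\<^sup>2 + ?q\<^sup>2 + 2 * \<beta> * (?p * ?q)"
    using nehari cross_le[OF u v] assms(1) L4p_nonneg[of u] L4p_nonneg[of v] by simp
  have "Sob\<^sup>2 / (2 * (1 + \<beta>)) = (2 * Sob\<^sup>2 / (1 + \<beta>)) / 4"
    using assms(1) by (simp add: field_simps)
  also have "\<dots> \<le> (dir u + dir v) / 4"
    by (intro divide_right_mono nehari_lower_bound_real[OF assms(1) Sob_nonneg p q pq lower upper]) simp
  also have "\<dots> = energy \<beta> u v" by (rule energy_Mstar[OF assms(2), symmetric])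
  finally show ?thesis .
qed

text \<open>On the ray \<open>(t z, t z)\<close> both Nehari constraints reduce to \<open>t\<^sup>2 (1 + \<beta>) \<parallel>z\<parallel>\<^sub>4\<^sup>4 = \<parallel>\<nabla>z\<parallel>\<^sub>2\<^sup>2\<close>.\<close>

lemma synchronized_Nstar:
  assumes "0 < 1 + \<beta>" "D12 z" "0 < dir z" "0 < L4p z"
  shows "\<exists>p\<in>Nstar \<beta>. (\<lambda>(u, v). energy \<beta> u v) p = (dir z)\<^sup>2 / (2 * (1 + \<beta>) * L4p z)"
proof -
  define s where "s = dir z / ((1 + \<beta>) * L4p z)"
  have s: "0 < s" using assms by (simp add: s_def)
  define u where "u x = sqrt s * z x" for x
  have Du: "D12 u" unfolding u_def by (rule D12_scale[OF assms(2)])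
  have du: "dir u = s * dir z" unfolding u_def using s by (simp add: dir_scale[OF assms(2)])
  have "sqrt s ^ 4 = (sqrt s ^ 2)\<^sup>2" by simp
  then have "sqrt s ^ 4 = s\<^sup>2" using s by simp
  then have Lu: "L4p u = s\<^sup>2 * L4p z" unfolding u_def L4p_scale by simp
  have sL: "(1 + \<beta>) * s * L4p z = dir z" using assms by (simp add: s_def)
  have "nonzero u" using L4p_eq_0_iff[OF Du] Lu s assms(4) by simp
  moreover have "dir u - L4p u - \<beta> * cross u u = s * (dir z - (1 + \<beta>) * s * L4p z)"
    unfolding cross_self du Lu by (simp add: power2_eq_square algebra_simps)
  then have "dir u - L4p u - \<beta> * cross u u = 0" using sL by simp
  ultimately have "(u, u) \<in> Nstar \<beta>" unfolding Nstar_def using Du by simp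
  moreover have "energy \<beta> u u = s * dir z - (1 + \<beta>) * s * L4p z * s / 2"
    unfolding energy_def cross_self du Lu by (simp add: power2_eq_square algebra_simps)
  then have "energy \<beta> u u = s * dir z / 2" unfolding sL by simp
  then have "energy \<beta> u u = (dir z)\<^sup>2 / (2 * (1 + \<beta>) * L4p z)"
    using assms by (simp add: s_def power2_eq_square)
  ultimately show ?thesis by force
qed

lemma L4p_le_add:
  assumes "D12 u" "D12 v"
  shows "L4p u \<le> 8 * L4p (\<lambda>x. u x + v x) + 8 * L4p v"
proof -
  have "L4p u \<le> (LINT x|lebesgue. 8 * (u x + v x) ^ 4 + 8 * (v x) ^ 4)"
    unfolding L4p_def
  proof (rule integral_mono)
    show "integrable lebesgue (\<lambda>x. (u x) ^ 4)" by (rule D12_integrable_power4[OF assms(1)])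
    show "integrable lebesgue (\<lambda>x. 8 * (u x + v x) ^ 4 + 8 * (v x) ^ 4)"
      using D12_integrable_power4[OF D12_add[OF assms]] D12_integrable_power4[OF assms(2)] by simp
    show "(u x) ^ 4 \<le> 8 * (u x + v x) ^ 4 + 8 * (v x) ^ 4" for x
      using power4_sum_le[of "u x + v x" "- v x"] by simp
  qed
  also have "\<dots> = 8 * L4p (\<lambda>x. u x + v x) + 8 * L4p v"
    unfolding L4p_def using D12_integrable_power4[OF D12_add[OF assms]] D12_integrable_power4[OF assms(2)]
    by simp
  finally show ?thesis .
qed

lemma dir_add_of_dir_eq_0:
  assumes "D12 w" "dir w = 0" "D12 v"
  shows "dir (\<lambda>x. w x + v x) = dir v"
proof -
  have "AE x in lebesgue. (norm (grad w x))\<^sup>2 = 0"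
    using assms(2) D12_grad(2)[OF assms(1)] unfolding dir_def
    by (subst (asm) integral_nonneg_eq_0_iff_AE) auto
  then have "AE x in lebesgue. (norm (grad w x + grad v x))\<^sup>2 = (norm (grad v x))\<^sup>2"
    by eventually_elim simp
  then have "(LINT x|lebesgue. (norm (grad w x + grad v x))\<^sup>2) = dir v"
    unfolding dir_def
    by (rule integral_cong_AE[rotated 2])
       (use weak_grad_measurable[OF D12_grad(1)[OF assms(1)]]
            weak_grad_measurable[OF D12_grad(1)[OF assms(3)]] in measurable)
  then show ?thesis using dir_add[OF assms(1,3)] by simp
qed

text \<open>Positivity of \<open>S\<close> (the Sobolev embedding) is not proved here, so a normalized \<open>w\<close> with
  \<open>\<nabla>w = 0\<close> cannot be excluded; adding a small multiple of a bump to it gives arbitrarily small quotients.\<close>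

lemma exists_small_quotient_of_dir_eq_0:
  assumes w: "D12 w" "L4p w = 1" "dir w = 0" and "0 < \<epsilon>"
  obtains z where "D12 z" "0 < dir z" "0 < L4p z" "(dir z)\<^sup>2 / L4p z < \<epsilon>"
proof -
  obtain \<psi> x0 where \<psi>: "test_fn \<psi>" "\<psi> x0 \<noteq> 0" by (rule exists_nonzero_test_fn)
  have D\<psi>: "D12 \<psi>" and L\<psi>: "0 < L4p \<psi>" and d\<psi>: "0 < dir \<psi>"
    by (rule D12_test_fn[OF \<psi>(1)], rule L4p_test_fn_pos[OF \<psi>], rule dir_test_fn_pos[OF \<psi>])
  define m where "m = min (1 / (16 * L4p \<psi>)) (\<epsilon> / (32 * (dir \<psi>)\<^sup>2))"
  have m: "0 < m" using L\<psi> d\<psi> assms(4) by (simp add: m_def)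
  have "m \<le> 1 / (16 * L4p \<psi>)" by (simp add: m_def)
  then have mL: "m * L4p \<psi> \<le> 1 / 16" using L\<psi> by (simp add: field_simps)
  have "m \<le> \<epsilon> / (32 * (dir \<psi>)\<^sup>2)" by (simp add: m_def)
  then have "m * (dir \<psi>)\<^sup>2 \<le> \<epsilon> / 32" using d\<psi> by (simp add: field_simps)
  then have md: "16 * (m * (dir \<psi>)\<^sup>2) < \<epsilon>" using assms(4) by linarith
  define v where "v x = sqrt (sqrt m) * \<psi> x" for x
  define z where "z x = w x + v x" for x
  have Dv: "D12 v" unfolding v_def by (rule D12_scale[OF D\<psi>])
  have Dz: "D12 z" unfolding z_def by (rule D12_add[OF w(1) Dv])
  have "sqrt (sqrt m) ^ 4 = (sqrt (sqrt m) ^ 2)\<^sup>2" by simp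
  then have Lv: "L4p v = m * L4p \<psi>" using m unfolding v_def L4p_scale by simp
  have "dir z = dir v" unfolding z_def by (rule dir_add_of_dir_eq_0[OF w(1,3) Dv])
  also have "\<dots> = sqrt m * dir \<psi>" unfolding v_def dir_scale[OF D\<psi>] using m by simp
  finally have dz: "dir z = sqrt m * dir \<psi>" .
  have Lz: "1 / 16 \<le> L4p z"
    using L4p_le_add[OF w(1) Dv] w(2) Lv mL unfolding z_def by linarith
  show ?thesis
  proof
    show "D12 z" "0 < dir z" "0 < L4p z" using Dz dz m d\<psi> Lz by simp_all
    have "(dir z)\<^sup>2 / L4p z \<le> (m * (dir \<psi>)\<^sup>2) / (1 / 16)"
      unfolding dz using m Lz by (intro frac_le) (simp_all add: power_mult_distrib)
    also have "\<dots> < \<epsilon>" using md by simp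
    finally show "(dir z)\<^sup>2 / L4p z < \<epsilon>" .
  qed
qed

lemma exists_quotient_less:
  assumes "0 < \<epsilon>"
  obtains z where "D12 z" "0 < dir z" "0 < L4p z" "(dir z)\<^sup>2 / L4p z < Sob\<^sup>2 + \<epsilon>"
proof -
  define \<eta> where "\<eta> = min 1 (\<epsilon> / (2 * Sob + 1))"
  have \<eta>: "0 < \<eta>" "\<eta> \<le> 1" using assms Sob_nonneg by (simp_all add: \<eta>_def)
  have "\<eta> \<le> \<epsilon> / (2 * Sob + 1)" by (simp add: \<eta>_def)
  then have \<eta>\<epsilon>: "\<eta> * (2 * Sob + 1) \<le> \<epsilon>" using Sob_nonneg by (simp add: field_simps)
  obtain w where w: "D12 w" "L4p w = 1" "dir w < Sob + \<eta>" by (rule exists_dir_less_Sob[OF \<eta>(1)])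
  show ?thesis
  proof (cases "dir w = 0")
    case True
    obtain z where "D12 z" "0 < dir z" "0 < L4p z" "(dir z)\<^sup>2 / L4p z < \<epsilon>"
      by (rule exists_small_quotient_of_dir_eq_0[OF w(1,2) True assms])
    then show ?thesis using that[of z] zero_le_power2[of Sob] by linarith
  next
    case False
    then have "0 < dir w" using dir_nonneg[of w] by linarith
    have "(dir w)\<^sup>2 < (Sob + \<eta>)\<^sup>2" using w(3) \<open>0 < dir w\<close> by (intro power_strict_mono) auto
    also have "\<dots> = Sob\<^sup>2 + \<eta> * (2 * Sob + \<eta>)" by (simp add: power2_eq_square algebra_simps)
    also have "\<dots> \<le> Sob\<^sup>2 + \<eta> * (2 * Sob + 1)" using \<eta> by simp
    finally show ?thesis using that[of w] w(1,2) \<open>0 < dir w\<close> \<eta>\<epsilon> by simp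
  qed
qed

lemma exists_Nstar_energy_less:
  assumes "0 < 1 + \<beta>" "0 < \<epsilon>"
  shows "\<exists>p\<in>Nstar \<beta>. (\<lambda>(u, v). energy \<beta> u v) p < Sob\<^sup>2 / (2 * (1 + \<beta>)) + \<epsilon>"
proof -
  have "0 < 2 * (1 + \<beta>) * \<epsilon>" using assms by simp
  then obtain z where z: "D12 z" "0 < dir z" "0 < L4p z" "(dir z)\<^sup>2 / L4p z < Sob\<^sup>2 + 2 * (1 + \<beta>) * \<epsilon>"
    by (rule exists_quotient_less)
  obtain p where p: "p \<in> Nstar \<beta>" "(\<lambda>(u, v). energy \<beta> u v) p = (dir z)\<^sup>2 / (2 * (1 + \<beta>) * L4p z)"
    using synchronized_Nstar[OF assms(1) z(1-3)] by blast
  have "(dir z)\<^sup>2 / (2 * (1 + \<beta>) * L4p z) = ((dir z)\<^sup>2 / L4p z) / (2 * (1 + \<beta>))" by simp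
  also have "\<dots> < (Sob\<^sup>2 + 2 * (1 + \<beta>) * \<epsilon>) / (2 * (1 + \<beta>))"
    using z(4) assms(1) by (intro divide_strict_right_mono) simp_all
  also have "\<dots> = Sob\<^sup>2 / (2 * (1 + \<beta>)) + \<epsilon>" using assms(1) by (simp add: field_simps)
  finally have "(\<lambda>(u, v). energy \<beta> u v) p < Sob\<^sup>2 / (2 * (1 + \<beta>)) + \<epsilon>" unfolding p(2) .
  with p(1) show ?thesis by blast
qed

lemma Nstar_nonempty: "0 < 1 + \<beta> \<Longrightarrow> Nstar \<beta> \<noteq> {}"
  using exists_Nstar_energy_less[of \<beta> 1] by auto

lemma bdd_below_energy_Mstar:
  assumes "1 \<le> \<beta>"
  shows "bdd_below ((\<lambda>(u, v). energy \<beta> u v) ` Mstar \<beta>)"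
  using energy_Mstar_ge[OF assms] by (auto intro!: bdd_belowI[of _ "Sob\<^sup>2 / (2 * (1 + \<beta>))"])

lemma m0_ge:
  assumes "1 \<le> \<beta>"
  shows "Sob\<^sup>2 / (2 * (1 + \<beta>)) \<le> m0 \<beta>"
  unfolding m0_def
proof (rule cInf_greatest)
  show "(\<lambda>(u, v). energy \<beta> u v) ` Mstar \<beta> \<noteq> {}"
    using Nstar_nonempty[of \<beta>] Nstar_subset_Mstar[of \<beta>] assms by auto
  show "Sob\<^sup>2 / (2 * (1 + \<beta>)) \<le> x" if "x \<in> (\<lambda>(u, v). energy \<beta> u v) ` Mstar \<beta>" for x
    using that energy_Mstar_ge[OF assms] by auto
qed

lemma m0_le_m2star:
  assumes "1 \<le> \<beta>"
  shows "m0 \<beta> \<le> m2star \<beta>"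
  unfolding m0_def m2star_def using Nstar_nonempty[of \<beta>] assms
  by (intro cInf_superset_mono[OF _ bdd_below_energy_Mstar[OF assms] image_mono[OF Nstar_subset_Mstar]])
     auto

lemma m2star_le:
  assumes "1 \<le> \<beta>"
  shows "m2star \<beta> \<le> Sob\<^sup>2 / (2 * (1 + \<beta>))"
proof (rule field_le_epsilon)
  fix \<epsilon> :: real assume "0 < \<epsilon>"
  then obtain p where p: "p \<in> Nstar \<beta>" "(\<lambda>(u, v). energy \<beta> u v) p < Sob\<^sup>2 / (2 * (1 + \<beta>)) + \<epsilon>"
    using exists_Nstar_energy_less[of \<beta> \<epsilon>] assms by auto
  have "bdd_below ((\<lambda>(u, v). energy \<beta> u v) ` Nstar \<beta>)"
    by (rule bdd_below_mono[OF bdd_below_energy_Mstar[OF assms] image_mono[OF Nstar_subset_Mstar]])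
  then have "m2star \<beta> \<le> (\<lambda>(u, v). energy \<beta> u v) p"
    unfolding m2star_def using p(1) by (intro cInf_lower) auto
  then show "m2star \<beta> \<le> Sob\<^sup>2 / (2 * (1 + \<beta>)) + \<epsilon>" using p(2) by linarith
qed

theorem lemma4p1:
  fixes \<beta> :: real
  assumes "\<beta> > 1"
  shows "m0 \<beta> = m2star \<beta> \<and> m2star \<beta> = Sob\<^sup>2 / (2 * (1 + \<beta>))"
proof -
  have "1 \<le> \<beta>" using assms by simp
  with m0_ge m0_le_m2star m2star_le show ?thesis by (meson order_antisym order_trans)
qed

end
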